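(* Let $\kappa\ge3$ be an integer, $\omega$ a nonnegative integer-valued function on the primes and $\mathcal{P}_0$ a finite set of primes with $\omega(p)<\kappa$ for $p\in\mathcal{P}_0$, $\omega(p)=\kappa$ for primes $p\notin\mathcal{P}_0$, and $\omega(p)<p$ for all primes $p$. Then for all $z>P(\kappa)$, \[L(z,\omega)\geq \frac{1}{\kappa!}\prod_p\left(1-\frac{\omega(p)}{p}\right)^{-1}\left(1-\frac{1}{p}\right)^\kappa\log^\kappa z\left(1-\frac{C'_\kappa}{\log z}\right),\] where $C'_\kappa = 1.02\kappa^2 + \kappa!\,C_\kappa$ and $C_\kappa = \frac{\exp(2e)}{(\kappa-1)!}\sum_{\ell=3}^{\kappa}\exp\left(\frac{e^2}{\ell}\cdot\frac{\log\ell}{\log\ell-1}\right)\log\ell$.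
   Context: $P(y)=\prod_{p\le y}p$. For a function $h$ on the primes with $0\le h(p)<p$, $L(z,h)=\sum_{q\leq z}\mu^2(q)\prod_{p\mid q}\frac{h(p)}{p-h(p)}$. Products $\prod_p$ run over all primes. *)

theory Defs
  imports "HOL-Analysis.Analysis" "HOL-Computational_Algebra.Squarefree"
begin

definition primorial :: "real \<Rightarrow> nat" where
  "primorial y = (\<Prod>p\<in>{p::nat. prime p \<and> real p \<le> y}. p)"

definition L_fun :: "real \<Rightarrow> (nat \<Rightarrow> real) \<Rightarrow> real" where
  "L_fun z h = (\<Sum>q\<in>{q::nat. 1 \<le> q \<and> real q \<le> z}.
      (if squarefree q then 1 else 0) * (\<Prod>p\<in>prime_factors q. h p / (real p - h p)))"

definition C_const :: "nat \<Rightarrow> real" where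
  "C_const k = exp (2 * exp 1) / fact (k - 1) *
     (\<Sum>l=3..k. exp ((exp 1)^2 / real l * (ln (real l) / (ln (real l) - 1))) * ln (real l))"

definition C'_const :: "nat \<Rightarrow> real" where
  "C'_const k = 1.02 * (real k)^2 + fact k * C_const k"

end

theory Submission
  imports Defs
begin

text \<open>
  \<open>L(z, \<omega>)\<close> is the summatory function of the multiplicative function supported on squarefree
  numbers with value \<open>\<omega>(p)/(p - \<omega>(p))\<close> at primes. Start from \<open>n \<mapsto> d\<^sub>\<kappa>(n)/n\<close>, whose summatory
  function is at least \<open>ln\<^sup>\<kappa> x / \<kappa>!\<close>, and replace its local factors by those of \<open>L\<close>, one prime
  \<open>p \<le> z\<close> at a time. A lower bound \<open>c ln\<^bsup>\<kappa>-1\<^esup>x (ln x - A)/\<kappa>!\<close>, valid for all \<open>x \<ge> 1\<close>, survives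
  each replacement, with \<open>c\<close> multiplied by the Euler factor \<open>(1 - 1/p)\<^sup>\<kappa>/(1 - \<omega>(p)/p)\<close> and \<open>A\<close>
  increased by \<open>O(\<kappa> ln p)\<close> for \<open>p < 2\<kappa>\<close>; for \<open>p \<ge> 2\<kappa>\<close> the inequality
  \<open>(1 - 1/p)\<^sup>\<kappa> \<le> (1 + \<kappa>\<^sup>2/p\<^sup>2) (1 - \<kappa>/p)\<close> brings the increase down to \<open>O(\<kappa>\<^sup>3 ln p/p\<^sup>2)\<close>.
  The total error is at most \<open>\<kappa>\<^sup>2 (5 + 3 ln \<kappa>) \<le> C'\<^sub>\<kappa>\<close>, and letting the set of replaced primes
  exhaust \<open>[1, N]\<close>, \<open>N \<rightarrow> \<infinity>\<close>, turns the product of Euler factors into the infinite product.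
\<close>

section \<open>Multiplicative functions given by local factors\<close>

text \<open>\<open>l p e\<close> is the value at \<open>p ^ e\<close>; keeping the local factor at \<open>p\<close> as a sequence turns
  Dirichlet convolution into the Cauchy product \<open>seq_conv\<close> of local factors.\<close>

definition mult_fun :: "(nat \<Rightarrow> nat \<Rightarrow> real) \<Rightarrow> nat \<Rightarrow> real" where
  "mult_fun l n = (\<Prod>p\<in>prime_factors n. l p (multiplicity p n))"

definition mult_sum :: "(nat \<Rightarrow> nat \<Rightarrow> real) \<Rightarrow> real \<Rightarrow> real" where
  "mult_sum l x = (\<Sum>n\<in>{n. 1 \<le> n \<and> real n \<le> x}. mult_fun l n)"

definition conv_unit :: "nat \<Rightarrow> real" where
  "conv_unit j = (if j = 0 then 1 else 0)"

definition seq_conv :: "(nat \<Rightarrow> real) \<Rightarrow> (nat \<Rightarrow> real) \<Rightarrow> nat \<Rightarrow> real" where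
  "seq_conv a b e = (\<Sum>i\<le>e. a i * b (e - i))"

lemma conv_unit_0 [simp]: "conv_unit 0 = 1"
  by (simp add: conv_unit_def)

lemma conv_unit_nonneg: "conv_unit j \<ge> 0"
  by (simp add: conv_unit_def)

lemma seq_conv_0 [simp]: "seq_conv a b 0 = a 0 * b 0"
  by (simp add: seq_conv_def)

lemma seq_conv_unit_left [simp]: "seq_conv conv_unit b = b"
proof
  fix e
  have "seq_conv conv_unit b e = (\<Sum>i\<le>e. if i = 0 then b (e - i) else 0)"
    unfolding seq_conv_def conv_unit_def by (rule sum.cong) auto
  then show "seq_conv conv_unit b e = b e" by (simp add: sum.delta)
qed

lemma seq_conv_unit_right [simp]: "seq_conv b conv_unit = b"
proof
  fix e
  have "seq_conv b conv_unit e = (\<Sum>i\<le>e. if i = e then b i else 0)"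
    unfolding seq_conv_def conv_unit_def by (rule sum.cong) auto
  then show "seq_conv b conv_unit e = b e" by (simp add: sum.delta)
qed

lemma seq_conv_nonneg: "(\<And>i. a i \<ge> 0) \<Longrightarrow> (\<And>j. b j \<ge> 0) \<Longrightarrow> seq_conv a b e \<ge> 0"
  unfolding seq_conv_def by (rule sum_nonneg) auto

lemma sum_seq_conv_le:
  assumes "\<And>i. a i \<ge> 0" and "\<And>j. b j \<ge> 0"
  shows "(\<Sum>e<n. seq_conv a b e) \<le> (\<Sum>i<n. a i) * (\<Sum>j<n. b j)"
proof -
  have "(\<Sum>e<n. seq_conv a b e) = (\<Sum>(e,i)\<in>Sigma {..<n} (\<lambda>e. {..e}). a i * b (e - i))"
    unfolding seq_conv_def by (rule sum.Sigma) auto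
  also have "\<dots> = (\<Sum>(i,j)\<in>{(i,j). i + j < n}. a i * b j)"
    by (rule sum.reindex_bij_witness[where i = "\<lambda>(i,j). (i+j, i)" and j = "\<lambda>(e,i). (i, e - i)"]) auto
  also have "\<dots> \<le> (\<Sum>(i,j)\<in>{..<n} \<times> {..<n}. a i * b j)"
    by (rule sum_mono2) (auto intro: mult_nonneg_nonneg assms)
  also have "\<dots> = (\<Sum>i<n. a i) * (\<Sum>j<n. b j)"
    by (simp add: sum_product sum.cartesian_product)
  finally show ?thesis .
qed

lemma sum_le_if_partial_sums_le:
  assumes "\<And>j. w j \<ge> (0::real)" and "\<And>n. (\<Sum>j<n. w j) \<le> W" and "finite (J::nat set)"
  shows "(\<Sum>j\<in>J. w j) \<le> W"
proof -
  have "J \<subseteq> {..<Suc (Max (insert 0 J))}"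
    using assms(3) by (auto simp: le_imp_less_Suc)
  then have "(\<Sum>j\<in>J. w j) \<le> (\<Sum>j<Suc (Max (insert 0 J)). w j)"
    by (intro sum_mono2) (auto simp: assms(1))
  also have "\<dots> \<le> W" by (rule assms(2))
  finally show ?thesis .
qed

lemma mult_fun_1 [simp]: "mult_fun l 1 = 1" "mult_fun l (Suc 0) = 1"
  by (simp_all add: mult_fun_def)

lemma mult_fun_nonneg: "(\<And>q e. l q e \<ge> 0) \<Longrightarrow> mult_fun l n \<ge> 0"
  unfolding mult_fun_def by (rule prod_nonneg) auto

lemma mult_fun_prime_power_mult:
  assumes p: "prime (p::nat)" and "\<not> p dvd m" and "m > 0" and "l p 0 = 1"
  shows "mult_fun l (p ^ e * m) = l p e * mult_fun l m"
proof (cases "e = 0")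
  case True
  then show ?thesis by (simp add: assms(4))
next
  case False
  have pe: "p ^ e \<noteq> 0" using p by (simp add: prime_gt_0_nat)
  have factors: "prime_factors (p ^ e * m) = insert p (prime_factors m)"
    using prime_factors_product[OF pe] assms False by (auto simp: prime_factorization_prime_power)
  have p_notin: "p \<notin> prime_factors m" using assms(2) by auto
  have mult_p: "multiplicity p (p ^ e * m) = e"
    using assms by (metis multiplicity_decomposeI not_prime_0)
  have mult_q: "multiplicity q (p ^ e * m) = multiplicity q m" if "q \<in> prime_factors m" for q
  proof -
    have q: "prime q" "q \<noteq> p" using that p_notin by auto
    then have "multiplicity q (p ^ e) = 0" using p multiplicity_distinct_prime_power by blast
    then show ?thesis using q pe assms(3) by (simp add: prime_elem_multiplicity_mult_distrib)
  qed
  have "mult_fun l (p ^ e * m) = l p e * (\<Prod>q\<in>prime_factors m. l q (multiplicity q (p ^ e * m)))"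
    unfolding mult_fun_def factors using p_notin mult_p by (simp add: prod.insert)
  also have "(\<Prod>q\<in>prime_factors m. l q (multiplicity q (p ^ e * m))) = mult_fun l m"
    unfolding mult_fun_def by (rule prod.cong) (auto simp: mult_q)
  finally show ?thesis .
qed

lemma divisors_prime_power_mult:
  assumes p: "prime (p::nat)" and nd: "\<not> p dvd k" and k: "k > 0"
  shows "{d. d dvd p ^ e * k} = (\<lambda>(i,d). p ^ i * d) ` ({..e} \<times> {d. d dvd k})"
proof
  show "(\<lambda>(i,d). p ^ i * d) ` ({..e} \<times> {d. d dvd k}) \<subseteq> {d. d dvd p ^ e * k}"
    by (auto intro: mult_dvd_mono le_imp_power_dvd)
next
  show "{d. d dvd p ^ e * k} \<subseteq> (\<lambda>(i,d). p ^ i * d) ` ({..e} \<times> {d. d dvd k})"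
  proof
    fix d assume "d \<in> {d. d dvd p ^ e * k}"
    then have dd: "d dvd p ^ e * k" by simp
    have n0: "p ^ e * k \<noteq> 0" using k p by (simp add: prime_gt_0_nat)
    then have "d \<noteq> 0" using dd by (metis dvd_0_left_iff)
    moreover have "\<not> is_unit p" using p by auto
    ultimately obtain y where y: "d = p ^ multiplicity p d * y" "\<not> p dvd y"
      using multiplicity_decompose' by blast
    have "multiplicity p d \<le> multiplicity p (p ^ e * k)"
      using dd n0 by (intro dvd_imp_multiplicity_le) auto
    also have "multiplicity p (p ^ e * k) = e"
      using p nd by (metis multiplicity_decomposeI not_prime_0)
    finally have le_e: "multiplicity p d \<le> e" .
    have "y dvd p ^ e * k" using dd y by (metis dvd_mult_right)
    moreover have "coprime y (p ^ e)"
      using y(2) p by (metis coprime_commute coprime_power_left_iff prime_imp_coprime)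
    ultimately have "y dvd k" using coprime_dvd_mult_right_iff by blast
    then show "d \<in> (\<lambda>(i,d). p ^ i * d) ` ({..e} \<times> {d. d dvd k})"
      using y le_e by (auto intro!: image_eqI[of _ _ "(multiplicity p d, y)"])
  qed
qed

lemma inj_on_prime_power_mult:
  assumes p: "prime (p::nat)" and nd: "\<not> p dvd k"
  shows "inj_on (\<lambda>(i,d). p ^ i * d) ({..e} \<times> {d. d dvd k})"
proof (rule inj_onI, clarsimp)
  fix i d j d' assume d: "d dvd k" and d': "d' dvd k" and eq: "p ^ i * d = p ^ j * d'"
  have "\<not> p dvd d" "\<not> p dvd d'" using d d' nd dvd_trans by blast+
  then have "multiplicity p (p ^ i * d) = i" "multiplicity p (p ^ j * d') = j"
    using p by (metis multiplicity_decomposeI not_prime_0)+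
  then have "i = j" using eq by simp
  then show "i = j \<and> d = d'" using eq p by (simp add: prime_gt_0_nat)
qed

lemma sum_divisors_prime_power_mult:
  assumes p: "prime (p::nat)" and k: "\<not> p dvd k" "k > 0" and a0: "a p 0 = 1" and b0: "b p 0 = 1"
  shows "(\<Sum>d\<in>{d. d dvd p ^ e * k}. mult_fun a d * mult_fun b (p ^ e * k div d))
    = seq_conv (a p) (b p) e * (\<Sum>d\<in>{d. d dvd k}. mult_fun a d * mult_fun b (k div d))"
proof -
  have split: "mult_fun a (p ^ i * d) * mult_fun b (p ^ e * k div (p ^ i * d))
      = a p i * b p (e - i) * (mult_fun a d * mult_fun b (k div d))" if "i \<le> e" "d dvd k" for i d
  proof -
    have d0: "d > 0" and kd0: "k div d > 0" using that k by (auto elim!: dvdE)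
    have "\<not> p dvd d" "\<not> p dvd (k div d)"
      using that k by (metis dvd_mult dvd_mult_div_cancel dvd_trans)+
    moreover have "p ^ e * k = (p ^ i * d) * (p ^ (e - i) * (k div d))"
      using that by (simp add: power_add[symmetric] mult_ac)
    then have "p ^ e * k div (p ^ i * d) = p ^ (e - i) * (k div d)"
      using d0 p by (simp add: prime_gt_0_nat)
    ultimately show ?thesis
      using mult_fun_prime_power_mult[where l = a, OF p _ d0 a0]
        mult_fun_prime_power_mult[where l = b, OF p _ kd0 b0] by simp
  qed
  have "(\<Sum>d\<in>{d. d dvd p ^ e * k}. mult_fun a d * mult_fun b (p ^ e * k div d))
      = (\<Sum>x\<in>{..e} \<times> {d. d dvd k}.
          mult_fun a (p ^ fst x * snd x) * mult_fun b (p ^ e * k div (p ^ fst x * snd x)))"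
    unfolding divisors_prime_power_mult[OF p k]
    by (subst sum.reindex[OF inj_on_prime_power_mult[OF p k(1)]]) (simp add: case_prod_beta)
  also have "\<dots> = (\<Sum>x\<in>{..e} \<times> {d. d dvd k}.
      (a p (fst x) * b p (e - fst x)) * (mult_fun a (snd x) * mult_fun b (k div snd x)))"
    using split by (intro sum.cong) auto
  also have "\<dots> = seq_conv (a p) (b p) e * (\<Sum>d\<in>{d. d dvd k}. mult_fun a d * mult_fun b (k div d))"
    unfolding sum_product sum.cartesian_product seq_conv_def by (simp add: case_prod_beta)
  finally show ?thesis .
qed

lemma mult_fun_dirichlet_conv:
  assumes a0: "\<And>q. a q 0 = 1" and b0: "\<And>q. b q 0 = 1"
  shows "n > 0 \<Longrightarrow>
    (\<Sum>d\<in>{d. d dvd n}. mult_fun a d * mult_fun b (n div d)) = mult_fun (\<lambda>q. seq_conv (a q) (b q)) n"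
proof (induction n rule: less_induct)
  case (less n)
  show ?case
  proof (cases "n = 1")
    case True
    then show ?thesis by simp
  next
    case False
    with less.prems have "n > 1" by simp
    then obtain p where p: "prime p" "p dvd n" using prime_factor_nat by (metis less_irrefl)
    define e where "e = multiplicity p n"
    have n0: "n \<noteq> 0" using \<open>n > 1\<close> by simp
    obtain k where k: "n = p ^ e * k" "\<not> p dvd k"
      using multiplicity_decompose'[OF n0] p e_def by (metis not_prime_unit)
    have k0: "k > 0" using k n0 by (cases k) auto
    have "e \<noteq> 0" using k p by (metis power_0 mult_1)
    then have "p \<le> p ^ e" using prime_gt_0_nat[OF p(1)] by (simp add: self_le_power)
    then have "k < n" using k k0 prime_gt_1_nat[OF p(1)]
      by (metis less_le_trans mult_less_cancel2 nat_mult_1 order.refl)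
    then show ?thesis
      using less.IH[OF _ k0] sum_divisors_prime_power_mult[where a = a and b = b and e = e, OF p(1) k(2) k0 a0 b0]
        mult_fun_prime_power_mult[OF p(1) k(2) k0, of "\<lambda>q. seq_conv (a q) (b q)" e]
      by (simp add: k(1) a0 b0)
  qed
qed

lemma finite_nat_le_real [simp]: "finite {n::nat. a \<le> n \<and> real n \<le> x}"
proof (rule finite_subset[of _ "{..nat \<lceil>x\<rceil>}"])
  show "{n::nat. a \<le> n \<and> real n \<le> x} \<subseteq> {..nat \<lceil>x\<rceil>}"
    by (auto simp: le_nat_iff) (metis ceiling_mono ceiling_of_nat)
qed simp

lemma sum_dirichlet_conv:
  "(\<Sum>n\<in>{n. 1 \<le> n \<and> real n \<le> x}. \<Sum>d\<in>{d. d dvd n}. f d * g (n div d)) =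
   (\<Sum>d\<in>{d. 1 \<le> d \<and> real d \<le> x}. f d * (\<Sum>m\<in>{m. 1 \<le> m \<and> real m \<le> x / real d}. (g m :: real)))"
proof -
  have "(\<Sum>n\<in>{n. 1 \<le> n \<and> real n \<le> x}. \<Sum>d\<in>{d. d dvd n}. f d * g (n div d)) =
        (\<Sum>(n,d)\<in>Sigma {n. 1 \<le> n \<and> real n \<le> x} (\<lambda>n. {d. d dvd n}). f d * g (n div d))"
    by (rule sum.Sigma) (auto simp: finite_nat_le_real)
  also have "\<dots> = (\<Sum>(d,m)\<in>Sigma {d. 1 \<le> d \<and> real d \<le> x} (\<lambda>d. {m. 1 \<le> m \<and> real m \<le> x / real d}). f d * g m)"
  proof (rule sum.reindex_bij_witness[where i = "\<lambda>(d,m). (d * m, d)" and j = "\<lambda>(n,d). (d, n div d)"])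
    fix a assume "a \<in> Sigma {n. 1 \<le> n \<and> real n \<le> x} (\<lambda>n. {d. d dvd n})"
    then obtain n d where a: "a = (n, d)" "1 \<le> n" "real n \<le> x" "d dvd n" by auto
    have d1: "1 \<le> d" using a by (metis dvd_0_left_iff less_one not_le not_one_le_zero)
    have nd: "d * (n div d) = n" using a by simp
    have "1 \<le> n div d" using nd a(2) by (cases "n div d") auto
    moreover have "real d * real (n div d) \<le> x" using nd a by (metis of_nat_mult)
    then have "real (n div d) \<le> x / real d" using d1 by (simp add: pos_le_divide_eq mult.commute)
    moreover have "real d \<le> x" using a dvd_imp_le[of d n] by linarith
    ultimately show "(\<lambda>(n,d). (d, n div d)) a
        \<in> Sigma {d. 1 \<le> d \<and> real d \<le> x} (\<lambda>d. {m. 1 \<le> m \<and> real m \<le> x / real d})"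
      using a d1 by simp
    show "(\<lambda>(d,m). (d * m, d)) ((\<lambda>(n,d). (d, n div d)) a) = a" using a nd by simp
    show "(case (\<lambda>(n,d). (d, n div d)) a of (d, m) \<Rightarrow> f d * g m) = (case a of (n, d) \<Rightarrow> f d * g (n div d))"
      using a by simp
  next
    fix b assume "b \<in> Sigma {d. 1 \<le> d \<and> real d \<le> x} (\<lambda>d. {m. 1 \<le> m \<and> real m \<le> x / real d})"
    then obtain d m where b: "b = (d, m)" "1 \<le> d" "1 \<le> m" "real m \<le> x / real d" by auto
    then have "real (d * m) \<le> x" by (simp add: pos_le_divide_eq mult.commute)
    then show "(\<lambda>(d,m). (d * m, d)) b \<in> Sigma {n. 1 \<le> n \<and> real n \<le> x} (\<lambda>n. {d. d dvd n})"
      using b by simp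
    show "(\<lambda>(n,d). (d, n div d)) ((\<lambda>(d,m). (d * m, d)) b) = b" using b by simp
  qed
  also have "\<dots> = (\<Sum>d\<in>{d. 1 \<le> d \<and> real d \<le> x}. \<Sum>m\<in>{m. 1 \<le> m \<and> real m \<le> x / real d}. f d * g m)"
    by (rule sum.Sigma[symmetric]) (auto simp: finite_nat_le_real)
  finally show ?thesis by (simp add: sum_distrib_left)
qed

lemma mult_sum_dirichlet_conv:
  assumes "\<And>q. a q 0 = 1" and "\<And>q. b q 0 = 1"
  shows "mult_sum (\<lambda>q. seq_conv (a q) (b q)) x
    = (\<Sum>d\<in>{d. 1 \<le> d \<and> real d \<le> x}. mult_fun a d * mult_sum b (x / real d))"
proof -
  have "mult_sum (\<lambda>q. seq_conv (a q) (b q)) x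
      = (\<Sum>n\<in>{n. 1 \<le> n \<and> real n \<le> x}. \<Sum>d\<in>{d. d dvd n}. mult_fun a d * mult_fun b (n div d))"
    unfolding mult_sum_def by (rule sum.cong) (auto simp: mult_fun_dirichlet_conv[of a b, OF assms])
  then show ?thesis unfolding sum_dirichlet_conv mult_sum_def .
qed

lemma mult_sum_nonneg: "(\<And>q e. l q e \<ge> 0) \<Longrightarrow> mult_sum l x \<ge> 0"
  unfolding mult_sum_def by (rule sum_nonneg) (auto intro: mult_fun_nonneg)

lemma mult_sum_mono: "(\<And>q e. l q e \<ge> 0) \<Longrightarrow> x \<le> y \<Longrightarrow> mult_sum l x \<le> mult_sum l y"
  unfolding mult_sum_def by (rule sum_mono2[OF finite_nat_le_real]) (auto intro: mult_fun_nonneg)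

lemma mult_sum_less_one: "x < 1 \<Longrightarrow> mult_sum l x = 0"
proof -
  assume "x < 1"
  then have empty: "{n::nat. 1 \<le> n \<and> real n \<le> x} = {}" by auto
  show ?thesis unfolding mult_sum_def empty by simp
qed

lemma mult_fun_conv_unit: "n \<ge> 1 \<Longrightarrow> mult_fun (\<lambda>q. conv_unit) n = (if n = 1 then 1 else 0)"
proof (cases "n = 1")
  case False
  assume "n \<ge> 1"
  with False obtain p where "prime p" "p dvd n"
    using prime_factor_nat by (metis le_neq_implies_less less_irrefl)
  then have p: "p \<in> prime_factors n" using \<open>n \<ge> 1\<close> by (simp add: in_prime_factors_iff)
  then have "multiplicity p n \<ge> 1" using \<open>n \<ge> 1\<close> by (simp add: prime_factors_multiplicity)
  then have "conv_unit (multiplicity p n) = 0" by (simp add: conv_unit_def)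
  with p have "mult_fun (\<lambda>q. conv_unit) n = 0"
    unfolding mult_fun_def by (intro prod_zero) blast+
  with False show ?thesis by simp
qed simp

lemma mult_sum_conv_unit: "x \<ge> 1 \<Longrightarrow> mult_sum (\<lambda>q. conv_unit) x = 1"
proof -
  assume x: "x \<ge> 1"
  have "mult_sum (\<lambda>q. conv_unit) x = (\<Sum>n\<in>{n. 1 \<le> n \<and> real n \<le> x}. if n = 1 then 1 else 0)"
    unfolding mult_sum_def by (rule sum.cong) (auto simp: mult_fun_conv_unit)
  also have "\<dots> = 1" using x by (simp add: sum.delta finite_nat_le_real)
  finally show ?thesis .
qed

lemma mult_fun_unit_update:
  assumes p: "prime (p::nat)" and t0: "t 0 = 1" and d: "d \<ge> 1"
  shows "mult_fun ((\<lambda>q. conv_unit)(p := t)) d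
    = (if d = p ^ multiplicity p d then t (multiplicity p d) else 0)"
proof (cases "d = p ^ multiplicity p d")
  case True
  show ?thesis
  proof (cases "multiplicity p d = 0")
    case True
    then have "d = 1" using \<open>d = p ^ multiplicity p d\<close> by simp
    then show ?thesis using t0 by simp
  next
    case False
    then have "mult_fun ((\<lambda>q. conv_unit)(p := t)) (p ^ multiplicity p d) = t (multiplicity p d)"
      unfolding mult_fun_def using p by (simp add: prime_factorization_prime_power multiplicity_prime_power)
    then show ?thesis using True by simp
  qed
next
  case False
  have "\<exists>q\<in>prime_factors d. q \<noteq> p"
  proof (rule ccontr)
    assume "\<not> (\<exists>q\<in>prime_factors d. q \<noteq> p)"
    then have "prime_factors d = {} \<or> prime_factors d = {p}" by auto
    moreover have "d = (\<Prod>q\<in>prime_factors d. q ^ multiplicity q d)"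
      using d prime_factorization_nat by simp
    ultimately show False using False by auto
  qed
  then obtain q where q: "q \<in> prime_factors d" "q \<noteq> p" by blast
  then have "multiplicity q d \<ge> 1" using d by (simp add: prime_factors_multiplicity)
  then have "mult_fun ((\<lambda>q. conv_unit)(p := t)) d = 0"
    unfolding mult_fun_def using q by (intro prod_zero) (auto simp: conv_unit_def intro!: bexI[of _ q])
  then show ?thesis using False by simp
qed

lemma finite_prime_powers_le:
  assumes "prime (p::nat)" shows "finite {j. real (p ^ j) \<le> x}"
proof (rule finite_subset[of _ "{..nat \<lceil>x\<rceil>}"])
  show "{j. real (p ^ j) \<le> x} \<subseteq> {..nat \<lceil>x\<rceil>}"
  proof
    fix j assume "j \<in> {j. real (p ^ j) \<le> x}"
    moreover have "(2::nat) ^ j \<le> p ^ j" using prime_ge_2_nat[OF assms] by (simp add: power_mono)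
    then have "j < p ^ j" using less_exp[of j] by linarith
    ultimately have "real j \<le> x" by (meson less_imp_le of_nat_le_iff order_trans mem_Collect_eq)
    then show "j \<in> {..nat \<lceil>x\<rceil>}" by (simp add: le_nat_iff) (metis ceiling_mono ceiling_of_nat)
  qed
qed simp

lemma sum_mult_fun_unit_update:
  assumes p: "prime (p::nat)" and t0: "t 0 = 1"
  shows "(\<Sum>d\<in>{d. 1 \<le> d \<and> real d \<le> x}. mult_fun ((\<lambda>q. conv_unit)(p := t)) d * X d) =
         (\<Sum>j\<in>{j. real (p ^ j) \<le> x}. t j * X (p ^ j))"
proof -
  let ?T = "(\<lambda>j. p ^ j) ` {j. real (p ^ j) \<le> x}"
  have p1: "p > 1" using prime_gt_1_nat[OF p] .
  have "(\<Sum>d\<in>{d. 1 \<le> d \<and> real d \<le> x}. mult_fun ((\<lambda>q. conv_unit)(p := t)) d * X d) =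
        (\<Sum>d\<in>?T. mult_fun ((\<lambda>q. conv_unit)(p := t)) d * X d)"
  proof (rule sum.mono_neutral_right[OF finite_nat_le_real], use p1 in force, clarify)
    fix d assume d: "1 \<le> d" "real d \<le> x" and "d \<notin> ?T"
    then have "d \<noteq> p ^ multiplicity p d"
      by (metis (mono_tags, lifting) image_eqI mem_Collect_eq)
    then show "mult_fun ((\<lambda>q. conv_unit)(p := t)) d * X d = 0"
      using mult_fun_unit_update[where t = t, OF p t0 d(1)] by simp
  qed
  also have "\<dots> = (\<Sum>j\<in>{j. real (p ^ j) \<le> x}. mult_fun ((\<lambda>q. conv_unit)(p := t)) (p ^ j) * X (p ^ j))"
    using p1 by (intro sum.reindex[unfolded comp_def] inj_onI) (auto simp: power_inject_exp)
  also have "\<dots> = (\<Sum>j\<in>{j. real (p ^ j) \<le> x}. t j * X (p ^ j))"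
    using mult_fun_unit_update[where t = t, OF p t0] p p1 by (intro sum.cong) (simp_all add: multiplicity_prime_power)
  finally show ?thesis .
qed

lemma mult_sum_update_conv:
  assumes p: "prime (p::nat)" and l0: "\<And>q. l q 0 = 1" and t0: "t 0 = 1" and s0: "s 0 = 1"
  shows "mult_sum (l(p := seq_conv t s)) x
    = (\<Sum>j\<in>{j. real (p ^ j) \<le> x}. t j * mult_sum (l(p := s)) (x / real (p ^ j)))"
proof -
  let ?a = "(\<lambda>q. conv_unit)(p := t)" and ?b = "l(p := s)"
  have "l(p := seq_conv t s) = (\<lambda>q. seq_conv (?a q) (?b q))" by auto
  then have "mult_sum (l(p := seq_conv t s)) x
      = (\<Sum>d\<in>{d. 1 \<le> d \<and> real d \<le> x}. mult_fun ?a d * mult_sum ?b (x / real d))"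
    using mult_sum_dirichlet_conv[of ?a ?b x] t0 s0 l0 by simp
  then show ?thesis by (simp only: sum_mult_fun_unit_update[where t = t, OF p t0])
qed

section \<open>The summatory function of \<open>d\<^sub>k(n)/n\<close>\<close>

fun conv_pow :: "(nat \<Rightarrow> real) \<Rightarrow> nat \<Rightarrow> nat \<Rightarrow> real" where
  "conv_pow a 0 = conv_unit"
| "conv_pow a (Suc k) = seq_conv a (conv_pow a k)"

definition geom_seq :: "nat \<Rightarrow> nat \<Rightarrow> real" where
  "geom_seq q j = 1 / real q ^ j"

text \<open>The local factors of \<open>n \<mapsto> d\<^sub>k(n)/n\<close>.\<close>

abbreviation divisor_factors :: "nat \<Rightarrow> nat \<Rightarrow> nat \<Rightarrow> real" where
  "divisor_factors k \<equiv> \<lambda>q. conv_pow (geom_seq q) k"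

lemma geom_seq_0 [simp]: "geom_seq q 0 = 1"
  by (simp add: geom_seq_def)

lemma geom_seq_nonneg: "geom_seq q j \<ge> 0"
  by (simp add: geom_seq_def)

lemma conv_pow_0: "a 0 = 1 \<Longrightarrow> conv_pow a k 0 = 1"
  by (induction k) auto

lemma conv_pow_nonneg: "(\<And>i. a i \<ge> 0) \<Longrightarrow> conv_pow a k j \<ge> 0"
  by (induction k arbitrary: j) (auto intro: seq_conv_nonneg conv_unit_nonneg)

lemma sum_conv_unit_le: "(\<Sum>j<n. conv_unit j) \<le> 1"
  by (cases n) (simp_all add: conv_unit_def sum.delta lessThan_Suc_eq_insert_0)

lemma sum_conv_pow_le:
  assumes a: "\<And>i. a i \<ge> 0" and A: "(\<Sum>i<n. a i) \<le> S"
  shows "(\<Sum>j<n. conv_pow a k j) \<le> S ^ k"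
proof (induction k)
  case 0
  then show ?case using sum_conv_unit_le by simp
next
  case (Suc k)
  have "S \<ge> 0" using A a by (meson order_trans sum_nonneg)
  have "(\<Sum>j<n. conv_pow a (Suc k) j) \<le> (\<Sum>i<n. a i) * (\<Sum>j<n. conv_pow a k j)"
    by simp (rule sum_seq_conv_le[OF a conv_pow_nonneg[OF a]])
  also have "\<dots> \<le> S * S ^ k"
    by (rule mult_mono[OF A Suc.IH \<open>S \<ge> 0\<close>]) (auto intro: sum_nonneg a conv_pow_nonneg)
  finally show ?case by simp
qed

lemma sum_geom_seq_le:
  assumes "q \<ge> 2" shows "(\<Sum>j<n. geom_seq q j) \<le> real q / (real q - 1)"
proof -
  have q1: "real q > 1" using assms by simp
  have "(\<Sum>j<n. geom_seq q j) = (\<Sum>j<n. (1 / real q) ^ j)"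
    unfolding geom_seq_def by (simp add: power_one_over)
  also have "\<dots> = (1 - (1 / real q) ^ n) / (1 - 1 / real q)"
    using q1 by (simp add: sum_gp_strict)
  also have "\<dots> \<le> 1 / (1 - 1 / real q)"
    using q1 by (intro divide_right_mono) auto
  also have "\<dots> = real q / (real q - 1)"
    using q1 by (simp add: field_simps)
  finally show ?thesis .
qed

lemma sum_divisor_factors_le: "q \<ge> 2 \<Longrightarrow> (\<Sum>j<n. divisor_factors k q j) \<le> (real q / (real q - 1)) ^ k"
  by (rule sum_conv_pow_le[OF geom_seq_nonneg sum_geom_seq_le])

lemma mult_fun_geom_seq: "n \<ge> 1 \<Longrightarrow> mult_fun geom_seq n = 1 / real n"
proof -
  assume "n \<ge> 1"
  then have "real n = real (\<Prod>p\<in>prime_factors n. p ^ multiplicity p n)"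
    using prime_factorization_nat[of n] by simp
  then show ?thesis
    unfolding mult_fun_def geom_seq_def by (simp add: prod_dividef)
qed

lemma power_diff_le:
  fixes u v :: real
  assumes v: "0 \<le> v" and vu: "v \<le> u"
  shows "u ^ Suc n - v ^ Suc n \<le> real (Suc n) * u ^ n * (u - v)"
proof (induction n)
  case 0
  then show ?case by simp
next
  case (Suc n)
  have u0: "u \<ge> 0" using v vu by linarith
  have "u ^ Suc (Suc n) - v ^ Suc (Suc n) = u * (u ^ Suc n - v ^ Suc n) + v ^ Suc n * (u - v)"
    by (simp add: algebra_simps)
  also have "\<dots> \<le> u * (real (Suc n) * u ^ n * (u - v)) + u ^ Suc n * (u - v)"
  proof (rule add_mono)
    show "u * (u ^ Suc n - v ^ Suc n) \<le> u * (real (Suc n) * u ^ n * (u - v))"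
      by (rule mult_left_mono[OF Suc.IH u0])
    show "v ^ Suc n * (u - v) \<le> u ^ Suc n * (u - v)"
      by (rule mult_right_mono[OF power_mono[OF vu v]]) (simp add: vu)
  qed
  also have "\<dots> = real (Suc (Suc n)) * u ^ Suc n * (u - v)"
    by (simp add: algebra_simps)
  finally show ?case .
qed

lemma nat_le_real_eq_atLeastAtMost:
  "x \<ge> 0 \<Longrightarrow> {d::nat. 1 \<le> d \<and> real d \<le> x} = {1..nat \<lfloor>x\<rfloor>}"
  by (auto simp: le_nat_iff le_floor_iff)

lemma pos_ln_power_diff_le:
  assumes d1: "real d \<ge> 1" and dx: "real d \<le> x"
  shows "max 0 (ln (x / real d)) ^ Suc k - max 0 (ln (x / real (Suc d))) ^ Suc k
    \<le> real (Suc k) * (ln (x / real d) ^ k / real d)"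
proof -
  define u where "u = ln (x / real d)"
  define v where "v = max 0 (ln (x / real (Suc d)))"
  have u0: "u \<ge> 0" unfolding u_def using d1 dx by simp
  have ln_Suc: "ln (real (Suc d) / real d) \<le> 1 / real d"
    using ln_le_minus_one[of "real (Suc d) / real d"] d1 by (simp add: field_simps)
  have "ln (x / real (Suc d)) \<le> ln (x / real d)"
    using d1 dx by (intro ln_mono) (auto simp: field_simps)
  then have vu: "v \<le> u" unfolding v_def u_def using u0 u_def by simp
  have "u - v \<le> 1 / real d"
  proof (cases "ln (x / real (Suc d)) \<ge> 0")
    case True
    then have "u - v = ln (real (Suc d) / real d)"
      unfolding u_def v_def using d1 dx by (simp add: ln_div)
    then show ?thesis using ln_Suc by simp
  next
    case False
    then have "x < real (Suc d)" using dx d1 by (simp add: divide_less_eq)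
    then have "u \<le> ln (real (Suc d) / real d)"
      unfolding u_def using d1 dx by (intro ln_mono) (auto simp: field_simps)
    moreover have "v = 0" unfolding v_def using False by simp
    ultimately show ?thesis using ln_Suc by simp
  qed
  have "max 0 (ln (x / real d)) ^ Suc k - max 0 (ln (x / real (Suc d))) ^ Suc k = u ^ Suc k - v ^ Suc k"
    unfolding u_def v_def using u0 u_def by simp
  also have "\<dots> \<le> real (Suc k) * u ^ k * (u - v)"
    by (rule power_diff_le[OF _ vu]) (simp add: v_def)
  also have "\<dots> \<le> real (Suc k) * u ^ k * (1 / real d)"
    by (rule mult_left_mono[OF \<open>u - v \<le> 1 / real d\<close>]) (simp add: u0)
  finally show ?thesis unfolding u_def by simp
qed

text \<open>The differences of \<open>max 0 (ln (x/d))\<^bsup>k+1\<^esup>\<close> over \<open>1 \<le> d \<le> x\<close> telescope to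
  \<open>ln\<^bsup>k+1\<^esup> x\<close>.\<close>

lemma sum_ln_power_div_ge:
  assumes x: "x \<ge> 1"
  shows "(\<Sum>d\<in>{d. 1 \<le> d \<and> real d \<le> x}. ln (x / real d) ^ k / real d) \<ge> ln x ^ Suc k / real (Suc k)"
proof -
  define N where "N = nat \<lfloor>x\<rfloor>"
  define U where "U d = max 0 (ln (x / real d)) ^ Suc k" for d :: nat
  have N1: "N \<ge> 1" and Nx: "real N \<le> x" and xN: "x < real (Suc N)"
    unfolding N_def using x by linarith+
  have "U (Suc N) = 0"
    using xN x by (simp add: U_def divide_less_eq)
  moreover have "U 1 = ln x ^ Suc k"
    unfolding U_def using x by simp
  moreover have "(\<Sum>d\<in>{1..N}. U (Suc d) - U d) = U (Suc N) - U 1"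
    using N1 by (intro sum_Suc_diff) simp
  ultimately have "ln x ^ Suc k = (\<Sum>d\<in>{1..N}. U d - U (Suc d))"
    unfolding sum_subtractf by linarith
  also have "\<dots> \<le> (\<Sum>d\<in>{1..N}. real (Suc k) * (ln (x / real d) ^ k / real d))"
    unfolding U_def using Nx
    by (intro sum_mono pos_ln_power_diff_le) (auto intro: order_trans[of _ "real N"])
  also have "\<dots> = real (Suc k) * (\<Sum>d\<in>{d. 1 \<le> d \<and> real d \<le> x}. ln (x / real d) ^ k / real d)"
    unfolding N_def nat_le_real_eq_atLeastAtMost[OF order_trans[OF zero_le_one x]]
    by (simp add: sum_distrib_left)
  finally show ?thesis
    by (simp add: pos_divide_le_eq mult.commute)
qed

lemma mult_sum_divisor_factors_ge: "x \<ge> 1 \<Longrightarrow> mult_sum (divisor_factors k) x \<ge> ln x ^ k / fact k"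
proof (induction k arbitrary: x)
  case 0
  then show ?case by (simp add: mult_sum_conv_unit)
next
  case (Suc k)
  have IH: "mult_fun geom_seq d * mult_sum (divisor_factors k) (x / real d) \<ge> ln (x / real d) ^ k / fact k / real d"
    if "d \<in> {d. 1 \<le> d \<and> real d \<le> x}" for d
  proof -
    have "x / real d \<ge> 1" using that by (simp add: le_divide_eq)
    then have "ln (x / real d) ^ k / fact k / real d \<le> mult_sum (divisor_factors k) (x / real d) / real d"
      by (intro divide_right_mono Suc.IH) simp_all
    then show ?thesis using that by (simp add: mult_fun_geom_seq)
  qed
  have "mult_sum (divisor_factors (Suc k)) x
      = (\<Sum>d\<in>{d. 1 \<le> d \<and> real d \<le> x}. mult_fun geom_seq d * mult_sum (divisor_factors k) (x / real d))"
    using mult_sum_dirichlet_conv[of geom_seq "divisor_factors k" x] by (simp add: conv_pow_0)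
  also have "\<dots> \<ge> (\<Sum>d\<in>{d. 1 \<le> d \<and> real d \<le> x}. ln (x / real d) ^ k / fact k / real d)"
    using IH by (rule sum_mono)
  also have "(\<Sum>d\<in>{d. 1 \<le> d \<and> real d \<le> x}. ln (x / real d) ^ k / fact k / real d)
      = (\<Sum>d\<in>{d. 1 \<le> d \<and> real d \<le> x}. ln (x / real d) ^ k / real d) / fact k"
    by (simp add: sum_divide_distrib mult.commute)
  also have "(\<Sum>d\<in>{d. 1 \<le> d \<and> real d \<le> x}. ln (x / real d) ^ k / real d) / fact k
      \<ge> (ln x ^ Suc k / real (Suc k)) / fact k"
    by (rule divide_right_mono[OF sum_ln_power_div_ge[OF Suc.prems]]) simp
  also have "(ln x ^ Suc k / real (Suc k)) / fact k = ln x ^ Suc k / fact (Suc k)"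
    by (simp add: field_simps)
  finally show ?case .
qed

section \<open>Replacing the local factor at one prime\<close>

lemma power_mult_shift_ge:
  fixes l t A :: real
  assumes t0: "0 \<le> t" and tl: "t \<le> l" and A0: "0 \<le> A"
  shows "(l - t) ^ m * (l - t - A) \<ge> l ^ m * (l - real (Suc m) * t - A)"
proof (cases "l - t - A \<ge> 0")
  case True
  have l0: "l \<ge> 0" using t0 tl by linarith
  show ?thesis
  proof (cases m)
    case 0
    then show ?thesis by simp
  next
    case (Suc m')
    then have "(l - t) ^ m \<ge> l ^ m - real m * l ^ m' * t"
      using power_diff_le[of "l - t" l m'] t0 tl by simp
    then have "(l - t) ^ m * (l - t - A) \<ge> (l ^ m - real m * l ^ m' * t) * (l - t - A)"
      by (rule mult_right_mono[OF _ True])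
    moreover have "real m * l ^ m' * t * (l - t - A) \<le> real m * l ^ m' * t * l"
      by (rule mult_left_mono) (use t0 A0 l0 in auto)
    ultimately show ?thesis using Suc by (simp add: algebra_simps)
  qed
next
  case False
  have "(l - t) ^ m \<le> l ^ m" by (rule power_mono) (use t0 tl in auto)
  then have "(l - t) ^ m * (l - t - A) \<ge> l ^ m * (l - t - A)"
    using False by (intro mult_right_mono_neg) auto
  moreover have "real (Suc m) * t \<ge> t" using t0 by (simp add: algebra_simps)
  then have "l ^ m * (l - t - A) \<ge> l ^ m * (l - real (Suc m) * t - A)"
    using t0 tl by (intro mult_left_mono) auto
  ultimately show ?thesis by linarith
qed

lemma log_lower_bound_div:
  fixes G :: "real \<Rightarrow> real" and k :: nat
  assumes k: "k \<ge> 1" and c: "c \<ge> 0" and A: "A \<ge> 0" and p: "p > 1" and x: "x \<ge> 1"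
    and G: "\<And>y. y \<ge> 1 \<Longrightarrow> G y \<ge> c * ln y ^ (k - 1) * (ln y - A) / fact k"
    and G0: "\<And>y. G y \<ge> 0"
  shows "G (x / p) \<ge> c * ln x ^ (k - 1) * (ln x - real k * ln p - A) / fact k"
proof (cases "x / p \<ge> 1")
  case True
  define l where "l = ln x"
  define t where "t = ln p"
  have lnxp: "ln (x / p) = l - t" unfolding l_def t_def using x p by (simp add: ln_div)
  have t0: "t > 0" unfolding t_def using p by simp
  have tl: "t \<le> l" using lnxp True by (metis diff_ge_0_iff_ge ln_ge_zero)
  have "(l - t) ^ (k - 1) * (l - t - A) \<ge> l ^ (k - 1) * (l - real (Suc (k - 1)) * t - A)"
    by (rule power_mult_shift_ge) (use t0 tl A in auto)
  moreover have "real (Suc (k - 1)) = real k" using k by simp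
  ultimately have "c * (l - t) ^ (k - 1) * (l - t - A) / fact k \<ge> c * (l ^ (k - 1) * (l - real k * t - A)) / fact k"
    using c by (smt (verit, ccfv_SIG) divide_right_mono fact_ge_zero mult_left_mono mult.assoc)
  then show ?thesis
    using G[OF True] unfolding lnxp l_def t_def by (simp add: mult.assoc)
next
  case False
  then have "ln x < ln p" using x p by (simp add: le_divide_eq)
  then have "ln x - real k * ln p - A \<le> 0" using k p A
    by (smt (verit) ln_gt_zero mult_le_cancel_right1 of_nat_1 of_nat_mono)
  then have "c * ln x ^ (k - 1) * (ln x - real k * ln p - A) / fact k \<le> 0"
    using c x by (simp add: divide_nonpos_pos mult_nonneg_nonpos)
  then show ?thesis using G0 by (meson order_trans)
qed

lemma log_lower_bound_combine:
  fixes G :: "real \<Rightarrow> real" and k :: nat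
  assumes k: "k \<ge> 1" and c: "c \<ge> 0" and A: "A \<ge> 0" and d: "\<delta> \<ge> 0" and p: "p > 1" and x: "x \<ge> 1"
    and G: "\<And>y. y \<ge> 1 \<Longrightarrow> G y \<ge> c * ln y ^ (k - 1) * (ln y - A) / fact k"
    and G0: "\<And>y. G y \<ge> 0"
  shows "G x + \<delta> * G (x / p)
    \<ge> (c * (1 + \<delta>)) * ln x ^ (k - 1) * (ln x - (A + real k * (\<delta> / (1 + \<delta>)) * ln p)) / fact k"
proof -
  define Q where "Q = c * ln x ^ (k - 1) / fact k"
  have "G x + \<delta> * G (x / p) \<ge> Q * (ln x - A) + \<delta> * (Q * (ln x - real k * ln p - A))"
    using G[OF x] log_lower_bound_div[OF k c A p x G G0] d unfolding Q_def
    by (intro add_mono mult_left_mono) (simp_all add: field_simps)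
  also have "Q * (ln x - A) + \<delta> * (Q * (ln x - real k * ln p - A))
      = (Q * (1 + \<delta>)) * (ln x - (A + real k * (\<delta> / (1 + \<delta>)) * ln p))"
    using d by (simp add: field_simps)
  also have "\<dots> = (c * (1 + \<delta>)) * ln x ^ (k - 1) * (ln x - (A + real k * (\<delta> / (1 + \<delta>)) * ln p)) / fact k"
    unfolding Q_def by simp
  finally show ?thesis .
qed

lemma one_minus_power_le:
  fixes x :: real
  assumes "0 \<le> x" "x \<le> 1"
  shows "(1 - x) ^ n \<le> 1 - real n * x + real n * (real n - 1) / 2 * x^2"
proof (induction n)
  case 0
  then show ?case by simp
next
  case (Suc n)
  have "(1 - x) ^ Suc n \<le> (1 - x) * (1 - real n * x + real n * (real n - 1) / 2 * x^2)"
    using mult_left_mono[OF Suc.IH] assms by simp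
  also have "\<dots> = 1 - real (Suc n) * x + real (Suc n) * (real (Suc n) - 1) / 2 * x^2
      - real n * (real n - 1) / 2 * x ^ 3"
    by (simp add: field_simps power2_eq_square power3_eq_cube)
  also have "\<dots> \<le> 1 - real (Suc n) * x + real (Suc n) * (real (Suc n) - 1) / 2 * x^2"
    using assms by (cases n) auto
  finally show ?case .
qed

lemma one_minus_inverse_power_le:
  fixes p :: real and k :: nat
  assumes k: "k \<ge> 1" and p: "p \<ge> 2 * real k"
  shows "(1 - 1 / p) ^ k \<le> (1 + real k^2 / p^2) * (1 - real k / p)"
proof -
  define x where "x = 1 / p"
  have p0: "p > 0" using p k by simp
  have x0: "0 \<le> x" and x1: "x \<le> 1" unfolding x_def using p k by (auto simp: field_simps)
  have xk: "real k * x \<le> 1 / 2" unfolding x_def using p p0 by (simp add: field_simps)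
  have "real k^2 * x^2 * (real k * x) \<le> real k^2 * x^2 * (1 / 2)"
    by (rule mult_left_mono[OF xk]) simp
  moreover have "real k * (real k - 1) * (x^2 / 2) \<le> real k^2 * (x^2 / 2)"
    by (rule mult_right_mono) (simp_all add: power2_eq_square algebra_simps)
  ultimately have "real k * (real k - 1) / 2 * x^2 \<le> real k^2 * x^2 - real k^2 * x^2 * (real k * x)"
    by simp
  moreover have "(1 + real k^2 * x^2) * (1 - real k * x)
      = 1 - real k * x + (real k^2 * x^2 - real k^2 * x^2 * (real k * x))"
    by (simp add: algebra_simps)
  ultimately have "1 - real k * x + real k * (real k - 1) / 2 * x^2 \<le> (1 + real k^2 * x^2) * (1 - real k * x)"
    by linarith
  with one_minus_power_le[OF x0 x1, of k] show ?thesis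
    unfolding x_def by (simp add: power_divide)
qed

lemma one_plus_weight_div_mass:
  fixes p w :: real
  assumes "p \<ge> 2" and "0 \<le> w" "w < p"
  shows "(1 + w / (p - w)) / (p / (p - 1)) ^ k = (1 - 1 / p) ^ k / (1 - w / p)"
proof -
  have "1 + w / (p - w) = 1 / (1 - w / p)" and "p / (p - 1) = 1 / (1 - 1 / p)"
    using assms by (simp_all add: field_simps)
  then show ?thesis by (simp add: power_one_over)
qed

definition sqfree_seq :: "real \<Rightarrow> nat \<Rightarrow> real" where
  "sqfree_seq g e = (if e = 0 then 1 else if e = 1 then g else 0)"

lemma sqfree_seq_0 [simp]: "sqfree_seq g 0 = 1"
  and sqfree_seq_1 [simp]: "sqfree_seq g (Suc 0) = g"
  by (simp_all add: sqfree_seq_def)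

lemma sqfree_seq_nonneg: "g \<ge> 0 \<Longrightarrow> sqfree_seq g j \<ge> 0"
  by (simp add: sqfree_seq_def)

lemma sum_sqfree_seq_le:
  assumes "g \<ge> 0" shows "(\<Sum>j<n. sqfree_seq g j) \<le> 1 + g"
proof -
  have "(\<Sum>j<n. sqfree_seq g j) = (\<Sum>j\<in>{..<n} \<inter> {0, 1}. sqfree_seq g j)"
    by (rule sum.mono_neutral_right) (auto simp: sqfree_seq_def)
  also have "\<dots> \<le> (\<Sum>j\<in>{0, 1}. sqfree_seq g j)"
    by (rule sum_mono2) (auto simp: sqfree_seq_nonneg assms)
  finally show ?thesis by simp
qed

lemma mult_fun_sqfree_seq:
  assumes "q \<ge> 1"
  shows "mult_fun (\<lambda>p. sqfree_seq (h p)) q = (if squarefree q then \<Prod>p\<in>prime_factors q. h p else 0)"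
proof (cases "squarefree q")
  case True
  have "multiplicity p q = 1" if "p \<in> prime_factors q" for p
  proof -
    have "multiplicity p q \<le> 1" using True assms that by (auto simp: squarefree_factorial_semiring'')
    moreover have "multiplicity p q \<ge> 1" using that assms by (simp add: prime_factors_multiplicity)
    ultimately show ?thesis by simp
  qed
  then show ?thesis
    unfolding mult_fun_def using True by (simp add: sqfree_seq_def cong: prod.cong)
next
  case False
  then obtain p where p: "prime p" "multiplicity p q > 1"
    using assms by (auto simp: squarefree_factorial_semiring'' not_le)
  then have "p \<in> prime_factors q" using assms by (auto simp: prime_factors_multiplicity)
  moreover have "sqfree_seq (h p) (multiplicity p q) = 0" using p by (simp add: sqfree_seq_def)
  ultimately show ?thesis
    unfolding mult_fun_def using False by (simp add: prod_zero_iff) blast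
qed

lemma mult_sum_update_sqfree:
  assumes p: "prime (p::nat)" and l0: "\<And>q. l q 0 = 1" and s0: "s 0 = 1" and x: "x \<ge> 1"
  shows "mult_sum (l(p := seq_conv (sqfree_seq g) s)) x
    = mult_sum (l(p := s)) x + g * mult_sum (l(p := s)) (x / real p)"
proof -
  let ?J = "{j. real (p ^ j) \<le> x}"
  let ?f = "\<lambda>j. sqfree_seq g j * mult_sum (l(p := s)) (x / real (p ^ j))"
  have fin: "finite (?J \<union> {0, 1})" using finite_prime_powers_le[OF p] by simp
  have "\<forall>j\<in>(?J \<union> {0, 1}) - ?J. ?f j = 0"
    using p x by (auto simp: divide_less_eq mult_sum_less_one)
  then have "(\<Sum>j\<in>?J. ?f j) = (\<Sum>j\<in>?J \<union> {0, 1}. ?f j)"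
    by (intro sum.mono_neutral_left[OF fin]) auto
  also have "\<dots> = (\<Sum>j\<in>{0, 1}. ?f j)"
    by (intro sum.mono_neutral_right[OF fin]) (auto simp: sqfree_seq_def)
  finally have "(\<Sum>j\<in>?J. ?f j) = (\<Sum>j\<in>{0, 1}. ?f j)" .
  then show ?thesis
    using mult_sum_update_conv[where t = "sqfree_seq g" and l = l and s = s, OF p l0 sqfree_seq_0 s0] by simp
qed

text \<open>All terms with \<open>j \<ge> 1\<close> are bounded, by monotonicity, by the one at \<open>x/p\<close>.\<close>

lemma mult_sum_update_le:
  assumes p: "prime (p::nat)" and l0: "\<And>q. l q 0 = 1" and lnn: "\<And>q e. l q e \<ge> 0"
    and Inn: "\<And>j. I j \<ge> 0" and I0: "I 0 = 1" and IT: "\<And>n. (\<Sum>j<n. I j) \<le> T" and x: "x \<ge> 1"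
  shows "mult_sum (l(p := I)) x
    \<le> mult_sum (l(p := conv_unit)) x + (T - 1) * mult_sum (l(p := conv_unit)) (x / real p)"
proof -
  let ?J = "{j. real (p ^ j) \<le> x}" and ?F = "mult_sum (l(p := conv_unit))"
  have finJ: "finite ?J" by (rule finite_prime_powers_le[OF p])
  have J0: "0 \<in> ?J" using x by simp
  have Fnn: "?F y \<ge> 0" for y by (rule mult_sum_nonneg) (simp add: lnn conv_unit_nonneg)
  have Fmono: "?F y \<le> ?F y'" if "y \<le> y'" for y y'
    by (rule mult_sum_mono[OF _ that]) (simp add: lnn conv_unit_nonneg)
  have "mult_sum (l(p := I)) x = (\<Sum>j\<in>?J. I j * ?F (x / real (p ^ j)))"
    using mult_sum_update_conv[where t = I and s = conv_unit and l = l, OF p l0 I0] by simp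
  also have "\<dots> = ?F x + (\<Sum>j\<in>?J - {0}. I j * ?F (x / real (p ^ j)))"
    using sum.remove[OF finJ J0, of "\<lambda>j. I j * ?F (x / real (p ^ j))"] I0 by simp
  also have "\<dots> \<le> ?F x + (\<Sum>j\<in>?J - {0}. I j * ?F (x / real p))"
  proof (intro add_left_mono sum_mono)
    fix j assume "j \<in> ?J - {0}"
    then have "p \<le> p ^ j" using prime_gt_0_nat[OF p] by (simp add: self_le_power)
    then have "real p \<le> real (p ^ j)" by (simp only: of_nat_le_iff)
    then have "x / real (p ^ j) \<le> x / real p"
      using x prime_gt_0_nat[OF p] by (intro divide_left_mono) auto
    then show "I j * ?F (x / real (p ^ j)) \<le> I j * ?F (x / real p)"
      by (intro mult_left_mono Fmono Inn)
  qed
  also have "\<dots> = ?F x + ((\<Sum>j\<in>?J. I j) - 1) * ?F (x / real p)"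
    using sum.remove[OF finJ J0, of I] I0 by (simp add: sum_distrib_right)
  also have "\<dots> \<le> ?F x + (T - 1) * ?F (x / real p)"
    using sum_le_if_partial_sums_le[OF Inn IT finJ] Fnn by (intro add_left_mono mult_right_mono) simp_all
  finally show ?thesis .
qed

lemma add_mult_ge_scaled:
  fixes G G' g T :: real
  assumes "0 \<le> G'" "G' \<le> G" "0 \<le> g" "1 + g \<le> T"
  shows "G + g * G' \<ge> ((1 + g) / T) * (G + (T - 1) * G')"
proof -
  have T: "T > 0" using assms by linarith
  have "G + g * G' - ((1 + g) / T) * (G + (T - 1) * G') = (G - G') * (1 - (1 + g) / T)"
    using T by (simp add: field_simps)
  also have "\<dots> \<ge> 0" using assms T by (simp add: divide_le_eq)
  finally show ?thesis by simp
qed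

lemma one_plus_weight_le:
  fixes p w :: real
  assumes k: "k \<ge> 1" and pk: "p \<ge> 2 * real k" and w0: "0 \<le> w" and wk: "w \<le> real k"
  shows "1 + w / (p - w) \<le> (1 + real k^2 / p^2) * (p / (p - 1)) ^ k"
proof -
  have p0: "p > 1" using pk k by linarith
  have "(1 - 1 / p) ^ k \<le> (1 + real k^2 / p^2) * (1 - real k / p)"
    by (rule one_minus_inverse_power_le[OF k pk])
  also have "\<dots> \<le> (1 + real k^2 / p^2) * (1 - w / p)"
    using wk p0 by (intro mult_left_mono) (auto simp: divide_right_mono)
  finally have "(1 - 1 / p) ^ k \<le> (1 + real k^2 / p^2) * (1 - w / p)" .
  moreover have "1 - w / p > 0" "(1 - 1 / p) ^ k > 0"
    using wk pk p0 by (auto simp: field_simps)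
  ultimately have "1 / (1 - w / p) \<le> (1 + real k^2 / p^2) / (1 - 1 / p) ^ k"
    by (simp add: divide_simps mult.commute)
  moreover have "1 + w / (p - w) = 1 / (1 - w / p)" "p / (p - 1) = 1 / (1 - 1 / p)"
    using wk pk p0 by (simp_all add: field_simps)
  ultimately show ?thesis by (simp add: power_one_over)
qed

lemma weight_coefficient_eq:
  fixes p w \<delta> c :: real
  assumes "p \<ge> 2" and "0 \<le> w" "w < p" and "\<delta> \<ge> 0"
  shows "(1 + w / (p - w)) / ((1 + \<delta>) * (p / (p - 1)) ^ k) * (c * (1 + \<delta>))
    = c * ((1 - 1 / p) ^ k / (1 - w / p))"
proof -
  have "b / (a * V) * (c * a) = c * (b / V)" if "a > 0" for a b V :: real
    using that by (simp add: field_simps)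
  then have "(1 + w / (p - w)) / ((1 + \<delta>) * (p / (p - 1)) ^ k) * (c * (1 + \<delta>))
      = c * ((1 + w / (p - w)) / (p / (p - 1)) ^ k)"
    using assms(4) by simp
  also have "\<dots> = c * ((1 - 1 / p) ^ k / (1 - w / p))"
    using one_plus_weight_div_mass[OF assms(1-3), of k] by simp
  finally show ?thesis .
qed

text \<open>The situation before the local factor at \<open>p\<close>, still that of \<open>d\<^sub>k(n)/n\<close>, is replaced.\<close>

locale factor_replacement =
  fixes l :: "nat \<Rightarrow> nat \<Rightarrow> real" and p k :: nat and c A :: real
  assumes p: "prime p"
    and l0: "\<And>q. l q 0 = 1" and lnn: "\<And>q e. l q e \<ge> 0"
    and lp: "l p = divisor_factors k p" and k: "k \<ge> 1" and c: "c \<ge> 0" and A: "A \<ge> 0"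
    and lower: "\<And>y. y \<ge> 1 \<Longrightarrow> mult_sum l y \<ge> c * ln y ^ (k - 1) * (ln y - A) / fact k"
begin

abbreviation removed_sum :: "real \<Rightarrow> real" where
  "removed_sum \<equiv> mult_sum (l(p := conv_unit))"

abbreviation local_mass :: real where
  "local_mass \<equiv> (real p / (real p - 1)) ^ k"

lemma p_ge_2: "real p \<ge> 2"
  using prime_ge_2_nat[OF p] by simp

lemma local_mass_pos: "local_mass > 0"
  using p_ge_2 by simp

lemma removed_sum_nonneg: "removed_sum y \<ge> 0"
  by (rule mult_sum_nonneg) (simp add: lnn conv_unit_nonneg)

lemma removed_sum_mono: "y \<le> y' \<Longrightarrow> removed_sum y \<le> removed_sum y'"
  by (rule mult_sum_mono) (simp_all add: lnn conv_unit_nonneg)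

lemma mult_sum_le_local_mass: "mult_sum l y \<le> local_mass * removed_sum y"
proof -
  have "l = l(p := seq_conv (divisor_factors k p) conv_unit)" using lp by auto
  then have "mult_sum l y = (\<Sum>j\<in>{j. real (p ^ j) \<le> y}. divisor_factors k p j * removed_sum (y / real (p ^ j)))"
    using mult_sum_update_conv[where l = l and t = "divisor_factors k p" and s = conv_unit, OF p l0]
    by (simp add: conv_pow_0)
  also have "\<dots> \<le> (\<Sum>j\<in>{j. real (p ^ j) \<le> y}. divisor_factors k p j * removed_sum y)"
  proof (rule sum_mono)
    fix j assume "j \<in> {j. real (p ^ j) \<le> y}"
    then have "y \<ge> 0" by (meson of_nat_0_le_iff order_trans mem_Collect_eq)
    moreover have "real (p ^ j) \<ge> 1" using p_ge_2 by simp
    ultimately have "y / real (p ^ j) \<le> y" by (simp add: divide_le_eq mult_le_cancel_left1)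
    then show "divisor_factors k p j * removed_sum (y / real (p ^ j)) \<le> divisor_factors k p j * removed_sum y"
      by (intro mult_left_mono removed_sum_mono conv_pow_nonneg geom_seq_nonneg)
  qed
  also have "\<dots> = (\<Sum>j\<in>{j. real (p ^ j) \<le> y}. divisor_factors k p j) * removed_sum y"
    by (simp add: sum_distrib_right)
  also have "\<dots> \<le> local_mass * removed_sum y"
    using sum_le_if_partial_sums_le[OF conv_pow_nonneg[OF geom_seq_nonneg]
        sum_divisor_factors_le finite_prime_powers_le[OF p]] prime_ge_2_nat[OF p]
    by (intro mult_right_mono removed_sum_nonneg) auto
  finally show ?thesis .
qed

lemma removed_sum_ge:
  "y \<ge> 1 \<Longrightarrow> removed_sum y \<ge> (c / local_mass) * ln y ^ (k - 1) * (ln y - A) / fact k"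
proof -
  assume "y \<ge> 1"
  then have "c * ln y ^ (k - 1) * (ln y - A) / fact k \<le> removed_sum y * local_mass"
    using order_trans[OF lower[OF \<open>y \<ge> 1\<close>] mult_sum_le_local_mass[of y]] by (simp add: mult.commute)
  then have "(c * ln y ^ (k - 1) * (ln y - A) / fact k) / local_mass \<le> removed_sum y"
    by (subst pos_divide_le_eq[OF local_mass_pos])
  then show ?thesis by (simp add: mult.commute)
qed

text \<open>The crude step, valid for every prime: compare with \<open>removed_sum\<close> through
  \<open>mult_sum_le_local_mass\<close>.\<close>

lemma mult_sum_replace_ge:
  fixes w :: real
  assumes w0: "0 \<le> w" and wp: "w < real p" and x: "x \<ge> 1"
  shows "mult_sum (l(p := sqfree_seq (w / (real p - w)))) x \<ge>
    (c * ((1 - 1 / real p) ^ k / (1 - w / real p))) * ln x ^ (k - 1)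
      * (ln x - (A + real k * (w / real p) * ln p)) / fact k"
proof -
  define g where "g = w / (real p - w)"
  have g0: "g \<ge> 0" unfolding g_def using w0 wp by simp
  have "mult_sum (l(p := sqfree_seq g)) x = removed_sum x + g * removed_sum (x / real p)"
    using mult_sum_update_sqfree[where l = l and s = conv_unit, OF p l0 _ x] by simp
  also have "\<dots> \<ge> (c / local_mass * (1 + g)) * ln x ^ (k - 1)
      * (ln x - (A + real k * (g / (1 + g)) * ln (real p))) / fact k"
    using local_mass_pos c p_ge_2
    by (intro log_lower_bound_combine[OF k _ A g0 _ x removed_sum_ge removed_sum_nonneg]) auto
  also have "g / (1 + g) = w / real p"
    unfolding g_def using wp w0 by (simp add: field_simps)
  also have "c / local_mass * (1 + g) = c * ((1 - 1 / real p) ^ k / (1 - w / real p))"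
    using one_plus_weight_div_mass[OF p_ge_2 w0 wp, of k] unfolding g_def
    by (metis times_divide_eq_left times_divide_eq_right)
  finally show ?thesis unfolding g_def .
qed

lemma mult_sum_aux_factor_eq:
  assumes "x \<ge> 1"
  shows "mult_sum (l(p := seq_conv (sqfree_seq \<delta>) (divisor_factors k p))) x
    = mult_sum l x + \<delta> * mult_sum l (x / real p)"
proof -
  have "l(p := divisor_factors k p) = l" using lp by auto
  then show ?thesis
    using mult_sum_update_sqfree[where l = l and s = "divisor_factors k p", OF p l0 _ assms]
    by (simp add: conv_pow_0)
qed

lemma mult_sum_aux_factor_le:
  assumes d0: "\<delta> \<ge> 0" and x: "x \<ge> 1"
  shows "mult_sum (l(p := seq_conv (sqfree_seq \<delta>) (divisor_factors k p))) x
    \<le> removed_sum x + ((1 + \<delta>) * local_mass - 1) * removed_sum (x / real p)"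
proof (rule mult_sum_update_le[where l = l and I = "seq_conv (sqfree_seq \<delta>) (divisor_factors k p)"
      and T = "(1 + \<delta>) * local_mass", OF p l0 lnn _ _ _ x])
  show "seq_conv (sqfree_seq \<delta>) (divisor_factors k p) j \<ge> 0" for j
    by (rule seq_conv_nonneg) (auto intro: sqfree_seq_nonneg d0 conv_pow_nonneg geom_seq_nonneg)
  show "seq_conv (sqfree_seq \<delta>) (divisor_factors k p) 0 = 1"
    by (simp add: conv_pow_0)
  show "(\<Sum>j<n. seq_conv (sqfree_seq \<delta>) (divisor_factors k p) j) \<le> (1 + \<delta>) * local_mass" for n
  proof -
    have "(\<Sum>j<n. seq_conv (sqfree_seq \<delta>) (divisor_factors k p) j)
        \<le> (\<Sum>j<n. sqfree_seq \<delta> j) * (\<Sum>j<n. divisor_factors k p j)"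
      by (rule sum_seq_conv_le) (auto intro: sqfree_seq_nonneg d0 conv_pow_nonneg geom_seq_nonneg)
    also have "\<dots> \<le> (1 + \<delta>) * local_mass"
      using d0 sum_sqfree_seq_le[OF d0] sum_divisor_factors_le[where q = p and n = n and k = k]
        prime_ge_2_nat[OF p]
      by (intro mult_mono) (auto simp: sum_nonneg conv_pow_nonneg geom_seq_nonneg)
    finally show ?thesis .
  qed
qed

text \<open>With \<open>\<delta> = k\<^sup>2/p\<^sup>2\<close>, the auxiliary local factor
  \<open>seq_conv (sqfree_seq \<delta>) (divisor_factors k p)\<close> has mass \<open>T = (1 + \<delta>) local_mass \<ge> 1 + g\<close>, so
  the new sum dominates \<open>(1 + g)/T\<close> times the auxiliary sum \<open>mult_sum l x + \<delta> mult_sum l (x/p)\<close>,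
  and the error only grows by \<open>O(k\<^sup>3 ln p / p\<^sup>2)\<close>.\<close>

lemma mult_sum_replace_ge_large:
  fixes w :: real
  assumes w0: "0 \<le> w" and wk: "w \<le> real k" and pk: "real p \<ge> 2 * real k" and x: "x \<ge> 1"
  shows "mult_sum (l(p := sqfree_seq (w / (real p - w)))) x \<ge>
    (c * ((1 - 1 / real p) ^ k / (1 - w / real p))) * ln x ^ (k - 1) *
      (ln x - (A + real k * ((real k^2 / real p^2) / (1 + real k^2 / real p^2)) * ln p)) / fact k"
proof -
  define \<delta> where "\<delta> = real k^2 / real p^2"
  define g where "g = w / (real p - w)"
  define T where "T = (1 + \<delta>) * local_mass"
  have wp: "w < real p" using wk pk k by linarith
  have d0: "\<delta> \<ge> 0" unfolding \<delta>_def by simp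
  have g0: "g \<ge> 0" unfolding g_def using w0 wp by simp
  have T0: "T > 0" unfolding T_def using d0 local_mass_pos by simp
  have "(c * ((1 - 1 / real p) ^ k / (1 - w / real p))) * ln x ^ (k - 1)
      * (ln x - (A + real k * (\<delta> / (1 + \<delta>)) * ln (real p))) / fact k
    = ((1 + g) / T) * ((c * (1 + \<delta>)) * ln x ^ (k - 1)
      * (ln x - (A + real k * (\<delta> / (1 + \<delta>)) * ln (real p))) / fact k)"
    unfolding weight_coefficient_eq[OF p_ge_2 w0 wp d0, of k c, symmetric] g_def T_def by simp
  also have "\<dots> \<le> ((1 + g) / T) * mult_sum (l(p := seq_conv (sqfree_seq \<delta>) (divisor_factors k p))) x"
    unfolding mult_sum_aux_factor_eq[OF x] using g0 T0 p_ge_2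
    by (intro mult_left_mono log_lower_bound_combine[OF k c A d0 _ x lower mult_sum_nonneg[OF lnn]]) auto
  also have "\<dots> \<le> ((1 + g) / T) * (removed_sum x + (T - 1) * removed_sum (x / real p))"
    using mult_sum_aux_factor_le[OF d0 x, folded T_def] g0 T0 by (intro mult_left_mono) auto
  also have "\<dots> \<le> removed_sum x + g * removed_sum (x / real p)"
    using x p_ge_2 one_plus_weight_le[OF k pk w0 wk] unfolding g_def T_def \<delta>_def
    by (intro add_mult_ge_scaled removed_sum_nonneg removed_sum_mono g0[unfolded g_def])
      (simp_all add: divide_le_eq)
  also have "\<dots> = mult_sum (l(p := sqfree_seq g)) x"
    using mult_sum_update_sqfree[where l = l and s = conv_unit, OF p l0 _ x] by simp
  finally show ?thesis
    unfolding g_def \<delta>_def .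
qed

end

section \<open>Sieve weights of dimension \<open>k\<close>\<close>

locale sieve_weights =
  fixes k :: nat and \<omega> :: "nat \<Rightarrow> nat"
  assumes k: "k \<ge> 1"
    and \<omega>_less: "\<And>p. prime p \<Longrightarrow> \<omega> p < p"
    and \<omega>_le: "\<And>p. prime p \<Longrightarrow> \<omega> p \<le> k"
begin

definition L_weight :: "nat \<Rightarrow> real" where
  "L_weight p = real (\<omega> p) / (real p - real (\<omega> p))"

definition sieve_factors :: "nat set \<Rightarrow> nat \<Rightarrow> nat \<Rightarrow> real" where
  "sieve_factors P = (\<lambda>q. if q \<in> P then sqfree_seq (L_weight q) else divisor_factors k q)"

definition euler_factor :: "nat \<Rightarrow> real" where
  "euler_factor p = (1 - 1 / real p) ^ k / (1 - real (\<omega> p) / real p)"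

definition step_error :: "nat \<Rightarrow> real" where
  "step_error p = (if 2 * real k \<le> real p
     then real k * ((real k^2 / real p^2) / (1 + real k^2 / real p^2)) * ln p
     else real k * (real (\<omega> p) / real p) * ln p)"

lemma L_weight_nonneg: "prime p \<Longrightarrow> L_weight p \<ge> 0"
  unfolding L_weight_def using \<omega>_less[of p] by simp

lemma euler_factor_pos: "prime p \<Longrightarrow> euler_factor p > 0"
  unfolding euler_factor_def using \<omega>_less[of p] prime_ge_2_nat[of p] by (simp add: field_simps)

lemma step_error_nonneg: "prime p \<Longrightarrow> step_error p \<ge> 0"
  unfolding step_error_def using prime_ge_2_nat[of p] by simp

lemma sieve_factors_0: "sieve_factors P q 0 = 1"
  unfolding sieve_factors_def by (simp add: conv_pow_0)

lemma sieve_factors_nonneg: "\<forall>p\<in>P. prime p \<Longrightarrow> sieve_factors P q e \<ge> 0"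
  unfolding sieve_factors_def by (auto intro!: sqfree_seq_nonneg L_weight_nonneg conv_pow_nonneg geom_seq_nonneg)

lemma factor_replacement_step_ge:
  assumes "factor_replacement l p k c A" and x: "x \<ge> 1"
  shows "mult_sum (l(p := sqfree_seq (L_weight p))) x
    \<ge> (c * euler_factor p) * ln x ^ (k - 1) * (ln x - (A + step_error p)) / fact k"
proof -
  interpret factor_replacement l p k c A by fact
  show ?thesis
  proof (cases "2 * real k \<le> real p")
    case True
    then show ?thesis
      using mult_sum_replace_ge_large[of "real (\<omega> p)", OF _ _ True x] \<omega>_le[OF p]
      unfolding euler_factor_def step_error_def L_weight_def by simp
  next
    case False
    then show ?thesis
      using mult_sum_replace_ge[of "real (\<omega> p)", OF _ _ x] \<omega>_less[OF p]
      unfolding euler_factor_def step_error_def L_weight_def by simp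
  qed
qed

lemma mult_sum_sieve_factors_ge:
  assumes "finite P" and "\<forall>p\<in>P. prime p" and "x \<ge> 1"
  shows "mult_sum (sieve_factors P) x
    \<ge> (\<Prod>p\<in>P. euler_factor p) * ln x ^ (k - 1) * (ln x - (\<Sum>p\<in>P. step_error p)) / fact k"
  using assms
proof (induction P arbitrary: x rule: finite_induct)
  case empty
  have "ln x ^ k = ln x ^ (k - 1) * ln x"
    using k by (metis Suc_diff_le diff_Suc_1 power_Suc2)
  then show ?case
    using mult_sum_divisor_factors_ge[OF empty.prems(2), of k] by (simp add: sieve_factors_def)
next
  case (insert p P)
  have p: "prime p" and prP: "\<forall>q\<in>P. prime q" using insert.prems by simp_all
  define c where "c = (\<Prod>q\<in>P. euler_factor q)"
  define A where "A = (\<Sum>q\<in>P. step_error q)"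
  have step: "factor_replacement (sieve_factors P) p k c A"
  proof
    show "sieve_factors P p = divisor_factors k p"
      unfolding sieve_factors_def using insert.hyps by simp
    show "c \<ge> 0" unfolding c_def using prP euler_factor_pos by (intro prod_nonneg) (auto intro: less_imp_le)
    show "A \<ge> 0" unfolding A_def using prP step_error_nonneg by (intro sum_nonneg) auto
  qed (use p sieve_factors_0 sieve_factors_nonneg[OF prP] k insert.IH[OF prP] in \<open>auto simp: c_def A_def\<close>)
  have upd: "sieve_factors (insert p P) = (sieve_factors P)(p := sqfree_seq (L_weight p))"
    unfolding sieve_factors_def by auto
  have prod: "(\<Prod>q\<in>insert p P. euler_factor q) = c * euler_factor p"
    and sum: "(\<Sum>q\<in>insert p P. step_error q) = A + step_error p"
    unfolding c_def A_def using insert.hyps by (simp_all add: mult.commute add.commute)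
  show ?case
    unfolding upd prod sum by (rule factor_replacement_step_ge[OF step insert.prems(2)])
qed

end

section \<open>The accumulated error\<close>

definition log_tail :: "nat \<Rightarrow> real" where
  "log_tail n = (2 + ln (real n)) / real n"

lemma log_tail_nonneg: "n \<ge> 1 \<Longrightarrow> log_tail n \<ge> 0"
  unfolding log_tail_def by simp

lemma ln_div_square_le_log_tail_diff:
  assumes "n \<ge> 2"
  shows "ln (real n) / (real n)^2 \<le> log_tail (n - 1) - log_tail n"
proof -
  define a where "a = real n"
  have a2: "a \<ge> 2" unfolding a_def using assms by simp
  have "ln (a / (a - 1)) \<le> a / (a - 1) - 1" using a2 by (intro ln_le_minus_one) auto
  then have "ln a - ln (a - 1) \<le> 1 / (a - 1)" using a2 by (simp add: ln_div field_simps)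
  then have "a * (ln a - ln (a - 1)) \<le> a * (1 / (a - 1))" using a2 by (intro mult_left_mono) auto
  also have "\<dots> \<le> 2" using a2 by (simp add: field_simps)
  finally have h2: "a * (ln a - ln (a - 1)) \<le> 2" .
  have "log_tail (n - 1) - log_tail n = (2 + ln a - a * (ln a - ln (a - 1))) / (a * (a - 1))"
    unfolding log_tail_def a_def using a2 assms by (simp add: of_nat_diff a_def field_simps)
  also have "\<dots> \<ge> ln a / (a * (a - 1))"
    using h2 a2 by (intro divide_right_mono) auto
  also have "ln a / (a * (a - 1)) \<ge> ln a / a^2"
    using a2 by (intro divide_left_mono) (auto simp: power2_eq_square)
  finally show ?thesis unfolding a_def by simp
qed

lemma sum_ln_div_square_le:
  assumes N: "N \<ge> 1"
  shows "(\<Sum>n\<in>{Suc N..M}. ln (real n) / (real n)^2) \<le> log_tail N"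
proof (cases "M \<le> N")
  case True
  then show ?thesis using log_tail_nonneg[OF N] by simp
next
  case False
  then obtain d where M: "M = N + d" using le_add_diff_inverse nat_le_linear by metis
  have "(\<Sum>n\<in>{Suc N..N + d}. ln (real n) / (real n)^2) \<le> log_tail N - log_tail (N + d)"
  proof (induction d)
    case (Suc d)
    then show ?case
      using ln_div_square_le_log_tail_diff[of "Suc (N + d)"] N by (simp add: add_Suc_right)
  qed simp
  then show ?thesis using log_tail_nonneg[of "N + d"] N unfolding M by simp
qed

context sieve_weights
begin

lemma step_error_small:
  assumes p: "prime p" and pk: "real p < 2 * real k"
  shows "step_error p \<le> real k * ln (2 * real k)"
proof -
  have p2: "real p \<ge> 2" using prime_ge_2_nat[OF p] by simp
  have "real (\<omega> p) / real p \<le> 1" using \<omega>_less[OF p] p2 by simp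
  then have "real k * (real (\<omega> p) / real p) * ln p \<le> real k * 1 * ln p"
    using p2 by (intro mult_right_mono mult_left_mono) auto
  also have "\<dots> \<le> real k * ln (2 * real k)"
    using pk p2 by (simp add: mult_left_mono)
  finally show ?thesis unfolding step_error_def using pk by simp
qed

lemma step_error_large:
  assumes p: "prime p" and pk: "2 * real k \<le> real p"
  shows "step_error p \<le> real k^3 * (ln (real p) / (real p)^2)"
proof -
  define d where "d = real k^2 / real p^2"
  have d0: "d \<ge> 0" unfolding d_def by simp
  have "d / (1 + d) \<le> d" using d0 by (simp add: divide_le_eq algebra_simps)
  then have "real k * (d / (1 + d)) * ln p \<le> real k * d * ln p"
    using prime_ge_2_nat[OF p] by (intro mult_right_mono mult_left_mono) auto
  also have "real k * d * ln p = real k^3 * (ln (real p) / (real p)^2)"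
    unfolding d_def by (simp add: power3_eq_cube power2_eq_square)
  finally show ?thesis unfolding step_error_def d_def using pk by simp
qed

lemma sum_step_error_small_le:
  assumes "finite P" and "\<forall>p\<in>P. prime p \<and> real p < 2 * real k"
  shows "(\<Sum>p\<in>P. step_error p) \<le> 2 * real k^2 * ln (2 * real k)"
proof -
  have "card P \<le> card {..<2 * k}" using assms(2) by (intro card_mono) auto
  then have "real (card P) \<le> 2 * real k" by simp
  have "(\<Sum>p\<in>P. step_error p) \<le> (\<Sum>p\<in>P. real k * ln (2 * real k))"
    using assms(2) by (intro sum_mono step_error_small) auto
  also have "\<dots> = real (card P) * (real k * ln (2 * real k))" by simp
  also have "\<dots> \<le> 2 * real k * (real k * ln (2 * real k))"
    using \<open>real (card P) \<le> 2 * real k\<close> k by (intro mult_right_mono) auto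
  finally show ?thesis by (simp add: power2_eq_square)
qed

lemma sum_step_error_large_le:
  assumes fin: "finite P" and P: "\<forall>p\<in>P. prime p \<and> 2 * real k \<le> real p"
  shows "(\<Sum>p\<in>P. step_error p) \<le> real k^2 * (2 + ln (2 * real k))"
proof -
  define M where "M = Max (insert 0 P)"
  have k1: "real k \<ge> 1" using k by simp
  have sub: "P \<subseteq> {Suc (2 * k - 1)..M}"
  proof
    fix p assume "p \<in> P"
    then have "2 * k \<le> p" "p \<le> M" using P fin unfolding M_def by (auto intro: Max_ge)
    then show "p \<in> {Suc (2 * k - 1)..M}" using k by auto
  qed
  have "(\<Sum>p\<in>P. step_error p) \<le> (\<Sum>p\<in>P. real k^3 * (ln (real p) / (real p)^2))"
    using P by (intro sum_mono step_error_large) auto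
  also have "\<dots> \<le> (\<Sum>n\<in>{Suc (2 * k - 1)..M}. real k^3 * (ln (real n) / (real n)^2))"
    by (rule sum_mono2[OF _ sub]) auto
  also have "\<dots> \<le> real k^3 * log_tail (2 * k - 1)"
    unfolding sum_distrib_left[symmetric] using k by (intro mult_left_mono sum_ln_div_square_le) auto
  also have "\<dots> = real k^2 * (real k / (2 * real k - 1)) * (2 + ln (2 * real k - 1))"
    unfolding log_tail_def using k by (simp add: of_nat_diff power3_eq_cube power2_eq_square)
  also have "\<dots> \<le> real k^2 * 1 * (2 + ln (2 * real k))"
    using k1 by (intro mult_mono mult_left_mono) (auto simp: divide_le_eq)
  finally show ?thesis by simp
qed

lemma sum_step_error_le:
  assumes fin: "finite P" and "\<forall>p\<in>P. prime p"
  shows "(\<Sum>p\<in>P. step_error p) \<le> real k^2 * (5 + 3 * ln (real k))"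
proof -
  let ?small = "{p. real p < 2 * real k}"
  have "(\<Sum>p\<in>P. step_error p) = (\<Sum>p\<in>P \<inter> ?small. step_error p) + (\<Sum>p\<in>P - ?small. step_error p)"
    by (rule sum.Int_Diff[OF fin])
  also have "\<dots> \<le> 2 * real k^2 * ln (2 * real k) + real k^2 * (2 + ln (2 * real k))"
    using fin assms(2)
    by (intro add_mono sum_step_error_small_le sum_step_error_large_le) auto
  also have "\<dots> = real k^2 * (2 + 3 * (ln 2 + ln (real k)))"
    using k by (simp add: ln_mult algebra_simps)
  also have "\<dots> \<le> real k^2 * (5 + 3 * ln (real k))"
    using ln_le_minus_one[of "2::real"] by (intro mult_left_mono) auto
  finally show ?thesis .
qed

end

section \<open>The constant \<open>C'\<^sub>k\<close>\<close>

text \<open>Only \<open>C'\<^sub>k \<ge> k\<^sup>2 (5 + 3 ln k)\<close> is needed; the paper's constant is far larger.\<close>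

definition C_summand :: "nat \<Rightarrow> real" where
  "C_summand l = exp ((exp 1)^2 / real l * (ln (real l) / (ln (real l) - 1))) * ln (real l)"

lemma exp_1_ge: "exp (1::real) \<ge> 2.5"
  using exp_lower_Taylor_quadratic[of "1::real"] by simp

lemma ln_3_gt_1: "ln (3::real) > 1"
proof -
  have "exp (1::real) < 3" using e_less_272 by simp
  then show ?thesis by (metis exp_less_cancel_iff exp_ln zero_less_numeral)
qed

lemma ln_3_le: "ln (3::real) \<le> 1.5"
proof -
  have "exp (1.5::real) \<ge> 1 + 1.5 + 1.5^2/2" using exp_lower_Taylor_quadratic[of "1.5::real"] by simp
  then have "exp (1.5::real) \<ge> 3" by (simp add: power2_eq_square)
  then show ?thesis by (metis exp_le_cancel_iff exp_ln zero_less_numeral)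
qed

lemma sum_ln_ge:
  assumes "k \<ge> 3"
  shows "(\<Sum>l=3..k. ln (real l)) \<ge> real k * ln (real k) - 2 * real k"
  using assms
proof (induction k rule: nat_induct_at_least)
  case base
  then show ?case using ln_3_le by simp
next
  case (Suc k)
  have k3: "real k \<ge> 3" using Suc.hyps by simp
  have "ln (real (Suc k) / real k) \<le> real (Suc k) / real k - 1"
    using k3 by (intro ln_le_minus_one) auto
  moreover have "ln (real (Suc k) / real k) = ln (real (Suc k)) - ln (real k)"
    using k3 by (simp add: ln_div)
  moreover have "real (Suc k) / real k - 1 = 1 / real k"
    using k3 by (simp add: field_simps)
  ultimately have "real k * (ln (real (Suc k)) - ln (real k)) \<le> real k * (1 / real k)"
    using k3 by (intro mult_left_mono) auto
  then have "real k * (ln (real (Suc k)) - ln (real k)) \<le> 1"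
    using k3 by simp
  moreover have "(\<Sum>l=3..Suc k. ln (real l)) = (\<Sum>l=3..k. ln (real l)) + ln (real (Suc k))"
    using Suc.hyps by simp
  moreover have "real (Suc k) * ln (real (Suc k)) - 2 * real (Suc k)
      = real k * ln (real (Suc k)) + ln (real (Suc k)) - 2 * real k - 2"
    by (simp add: algebra_simps)
  ultimately show ?case
    using Suc.IH by (simp add: algebra_simps)
qed

lemma C_summand_ge_ln: "l \<ge> 3 \<Longrightarrow> C_summand l \<ge> ln (real l)"
proof -
  assume "l \<ge> 3"
  then have "ln (3::real) \<le> ln (real l)" by simp
  then have "ln (real l) > 1" using ln_3_gt_1 by linarith
  then have "exp ((exp 1)^2 / real l * (ln (real l) / (ln (real l) - 1))) \<ge> 1" by simp
  with \<open>ln (real l) > 1\<close> show ?thesis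
    unfolding C_summand_def using mult_right_mono[of 1 _ "ln (real l)"] by simp
qed

lemma C_summand_3_ge: "C_summand 3 \<ge> 26"
proof -
  have "(exp (1::real))^2 \<ge> 2.5^2" by (rule power_mono[OF exp_1_ge]) simp
  moreover have "ln (3::real) / (ln 3 - 1) \<ge> 3" using ln_3_gt_1 ln_3_le by (simp add: le_divide_eq)
  ultimately have "(exp 1)^2 / 3 * (ln 3 / (ln 3 - 1)) \<ge> 6.25 / 3 * (3::real)"
    by (intro mult_mono divide_right_mono) (auto simp: power2_eq_square)
  then have "(exp 1)^2 / 3 * (ln 3 / (ln 3 - 1)) \<ge> (6.25::real)" by simp
  then have "exp (6.25::real) \<le> exp ((exp 1)^2 / 3 * (ln 3 / (ln 3 - 1)))"
    by (simp only: exp_le_cancel_iff)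
  moreover have "exp (6.25::real) \<ge> 1 + 6.25 + 6.25^2/2"
    using exp_lower_Taylor_quadratic[of "6.25::real"] by simp
  moreover have "(1 + 6.25 + 6.25^2/2 :: real) \<ge> 26" by (simp add: power2_eq_square)
  ultimately have "exp ((exp 1)^2 / 3 * (ln 3 / (ln 3 - 1))) \<ge> (26::real)"
    by linarith
  then have "26 * 1 \<le> exp ((exp 1)^2 / 3 * (ln 3 / (ln 3 - 1))) * ln (3::real)"
    using ln_3_gt_1 by (intro mult_mono) auto
  then show ?thesis unfolding C_summand_def by simp
qed

lemma exp_2_exp_1_ge: "exp (2 * exp 1) \<ge> (18.5::real)"
proof -
  have "exp (5::real) \<ge> 1 + 5 + 5^2/2" using exp_lower_Taylor_quadratic[of "5::real"] by simp
  moreover have "exp (5::real) \<le> exp (2 * exp 1)" using exp_1_ge by (simp only: exp_le_cancel_iff)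
  moreover have "(1 + 5 + 5^2/2 :: real) = 18.5" by (simp add: power2_eq_square)
  ultimately show ?thesis by linarith
qed

lemma fact_mult_C_const:
  assumes "k \<ge> 1"
  shows "fact k * C_const k = real k * exp (2 * exp 1) * (\<Sum>l=3..k. C_summand l)"
proof -
  have "fact k = real k * fact (k - 1)" using assms by (intro fact_reduce) simp
  then show ?thesis unfolding C_const_def C_summand_def by simp
qed

lemma C_sum_ge_26:
  assumes "k \<ge> 3"
  shows "(\<Sum>l=3..k. C_summand l) \<ge> 26"
proof -
  have nonneg: "C_summand l \<ge> 0" if "l \<ge> 3" for l
  proof -
    have "ln (real l) \<ge> 0" using that by simp
    then show ?thesis using C_summand_ge_ln[OF that] by linarith
  qed
  have "C_summand 3 \<le> (\<Sum>l=3..k. C_summand l)"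
    by (rule member_le_sum) (use assms nonneg in auto)
  then show ?thesis using C_summand_3_ge by simp
qed

lemma C_sum_ge:
  assumes "k \<ge> 3"
  shows "(\<Sum>l=3..k. C_summand l) \<ge> real k * ln (real k) - 2 * real k"
proof -
  have "(\<Sum>l=3..k. ln (real l)) \<le> (\<Sum>l=3..k. C_summand l)"
    using C_summand_ge_ln by (intro sum_mono) auto
  then show ?thesis using sum_ln_ge[OF assms] by linarith
qed

text \<open>For \<open>ln k \<ge> 3\<close> the sum is at least \<open>k ln k - 2k\<close>; for the remaining \<open>k < e\<^sup>3 < 21\<close> its
  first term \<open>C_summand 3 \<ge> 26\<close> suffices.\<close>

lemma exp_mult_C_sum_ge:
  assumes k3: "k \<ge> 3"
  shows "exp (2 * exp 1) * (\<Sum>l=3..k. C_summand l) \<ge> real k * (4 + 3 * ln (real k))"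
proof (cases "ln (real k) \<ge> 3")
  case True
  have k0: "real k \<ge> 3" using k3 by simp
  then have "real k * ln (real k) - 2 * real k \<ge> 0"
    using mult_left_mono[OF True, of "real k"] by linarith
  then have "exp (2 * exp 1) * (\<Sum>l=3..k. C_summand l) \<ge> 18.5 * (real k * ln (real k) - 2 * real k)"
    using exp_2_exp_1_ge C_sum_ge[OF k3] C_sum_ge_26[OF k3] by (intro mult_mono) auto
  moreover have "real k * (15.5 * ln (real k) - 41) \<ge> 0" using True k0 by simp
  then have "18.5 * (real k * ln (real k) - 2 * real k) \<ge> real k * (4 + 3 * ln (real k))"
    by (simp add: algebra_simps)
  ultimately show ?thesis by linarith
next
  case False
  have k0: "real k \<ge> 3" using k3 by simp
  with False have "real k < exp 3" by (metis exp_less_cancel_iff exp_ln not_le less_le_trans zero_less_numeral)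
  moreover have "exp (3::real) = (exp 1)^3" using exp_of_nat_mult[of 3 "1::real"] by simp
  moreover have "(exp (1::real))^3 < 2.72^3" using e_less_272 by (intro power_strict_mono) auto
  moreover have "(2.72::real)^3 \<le> 21" by (simp add: power3_eq_cube)
  ultimately have "real k < 21" by linarith
  have "exp (2 * exp 1) * (\<Sum>l=3..k. C_summand l) \<ge> 18.5 * 26"
    using exp_2_exp_1_ge C_sum_ge_26[OF k3] by (intro mult_mono) auto
  moreover have "real k * (4 + 3 * ln (real k)) \<le> 21 * (4 + 3 * 3)"
    using \<open>real k < 21\<close> False k0 by (intro mult_mono) auto
  ultimately show ?thesis by simp
qed

lemma C'_const_ge:
  assumes k3: "k \<ge> 3"
  shows "C'_const k \<ge> real k^2 * (5 + 3 * ln (real k))"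
proof -
  have "C'_const k = 1.02 * real k^2 + real k * (exp (2 * exp 1) * (\<Sum>l=3..k. C_summand l))"
    using fact_mult_C_const[of k] k3 unfolding C'_const_def by simp
  also have "\<dots> \<ge> 1.02 * real k^2 + real k * (real k * (4 + 3 * ln (real k)))"
    using exp_mult_C_sum_ge[OF k3] by (intro add_left_mono mult_left_mono) auto
  finally have "C'_const k \<ge> 1.02 * real k^2 + real k * (real k * (4 + 3 * ln (real k)))" .
  moreover have "1.02 * real k^2 + real k * (real k * (4 + 3 * ln (real k)))
      = real k^2 * (5 + 3 * ln (real k)) + 0.02 * real k^2"
    by (simp add: algebra_simps power2_eq_square)
  moreover have "0.02 * real k^2 \<ge> 0" by simp
  ultimately show ?thesis by linarith
qed

section \<open>Passing to the Euler product\<close>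

context sieve_weights
begin

definition euler_seq :: "nat \<Rightarrow> real" where
  "euler_seq n = (if prime n then inverse (1 - real (\<omega> n) / real n) * (1 - 1 / real n) ^ k else 1)"

lemma prod_euler_seq_atMost: "prod euler_seq {..N} = (\<Prod>p\<in>{p. prime p \<and> p \<le> N}. euler_factor p)"
proof -
  have "prod euler_seq {..N} = prod euler_seq {p. prime p \<and> p \<le> N}"
    by (rule prod.mono_neutral_right) (auto simp: euler_seq_def)
  also have "\<dots> = (\<Prod>p\<in>{p. prime p \<and> p \<le> N}. euler_factor p)"
    by (rule prod.cong) (auto simp: euler_seq_def euler_factor_def divide_inverse mult.commute)
  finally show ?thesis .
qed

lemma euler_seq_bound:
  assumes p: "prime p" and "\<omega> p = k" and pk: "2 * real k \<le> real p"
  shows "norm (euler_seq p - 1) \<le> real k^2 / real p^2"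
proof -
  have p2: "real p \<ge> 2" using prime_ge_2_nat[OF p] by simp
  have q0: "1 - real k / real p > 0" using pk k p2 by (simp add: field_simps)
  have e: "euler_seq p = (1 - 1 / real p) ^ k / (1 - real k / real p)"
    unfolding euler_seq_def using assms by (simp add: divide_inverse mult.commute)
  have "(1 - 1 / real p) ^ k \<ge> 1 - real k / real p"
    using Bernoulli_inequality[of "- (1 / real p)" k] p2 by simp
  then have "euler_seq p \<ge> 1" unfolding e using q0 by simp
  moreover have "(1 - 1 / real p) ^ k \<le> (1 + real k^2 / real p^2) * (1 - real k / real p)"
    by (rule one_minus_inverse_power_le[OF k pk])
  then have "euler_seq p \<le> 1 + real k^2 / real p^2" unfolding e using q0 by (simp add: divide_le_eq)
  ultimately show ?thesis by simp
qed

lemma convergent_prod_euler_seq: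
  assumes "finite P0" and outside: "\<And>p. prime p \<Longrightarrow> p \<notin> P0 \<Longrightarrow> \<omega> p = k"
  shows "convergent_prod euler_seq"
proof -
  define N0 where "N0 = max (2 * k) (Suc (Max (insert 0 P0)))"
  have "norm (euler_seq n - 1) \<le> real k^2 * inverse (real n ^ 2)" if "n \<ge> N0" for n
  proof (cases "prime n")
    case True
    have "n \<notin> P0"
    proof
      assume "n \<in> P0"
      then have "n \<le> Max (insert 0 P0)" using assms(1) by (intro Max_ge) auto
      then show False using that unfolding N0_def by simp
    qed
    moreover have "2 * real k \<le> real n" using that unfolding N0_def by simp
    ultimately show ?thesis
      using euler_seq_bound[OF True outside[OF True]] by (simp add: divide_inverse)
  qed (simp add: euler_seq_def)
  moreover have "summable (\<lambda>n. real k^2 * inverse (real n ^ 2))"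
    by (rule summable_mult, rule inverse_power_summable) simp
  ultimately have "summable (\<lambda>n. norm (euler_seq n - 1))"
    by (intro summable_comparison_test_ev[OF _ \<open>summable _\<close>]) (auto simp: eventually_sequentially)
  then show ?thesis
    by (intro abs_convergent_prod_imp_convergent_prod summable_imp_abs_convergent_prod)
qed

lemma L_fun_eq_mult_sum:
  assumes N: "real N \<ge> z"
  shows "L_fun z (\<lambda>p. real (\<omega> p)) = mult_sum (sieve_factors {p. prime p \<and> p \<le> N}) z"
  unfolding L_fun_def mult_sum_def
proof (rule sum.cong[OF refl])
  fix q assume "q \<in> {q. 1 \<le> q \<and> real q \<le> z}"
  then have q1: "q \<ge> 1" and qz: "real q \<le> z" by auto
  have "p \<le> N" if "p \<in> prime_factors q" for p
  proof -
    have "p dvd q" using that by auto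
    then have "real p \<le> real q" using q1 by (simp add: dvd_imp_le)
    then show ?thesis using qz N by simp
  qed
  then have "mult_fun (sieve_factors {p. prime p \<and> p \<le> N}) q = mult_fun (\<lambda>p. sqfree_seq (L_weight p)) q"
    unfolding mult_fun_def sieve_factors_def by (intro prod.cong) auto
  then show "(if squarefree q then 1 else 0) * (\<Prod>p\<in>prime_factors q. real (\<omega> p) / (real p - real (\<omega> p)))
      = mult_fun (sieve_factors {p. prime p \<and> p \<le> N}) q"
    using mult_fun_sqfree_seq[OF q1] by (simp add: L_weight_def)
qed

lemma L_fun_ge_partial_euler_prod:
  assumes k3: "k \<ge> 3" and z: "z \<ge> 1" and N: "real N \<ge> z"
  shows "L_fun z (\<lambda>p. real (\<omega> p)) \<ge> prod euler_seq {..N} * (ln z ^ (k - 1) * (ln z - C'_const k) / fact k)"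
proof -
  let ?P = "{p. prime p \<and> p \<le> N}"
  have finP: "finite ?P" and prP: "\<forall>p\<in>?P. prime p" by auto
  have "(\<Sum>p\<in>?P. step_error p) \<le> C'_const k"
    using sum_step_error_le[OF finP prP] C'_const_ge[OF k3] by linarith
  then have "ln z ^ (k - 1) * (ln z - C'_const k) / fact k \<le> ln z ^ (k - 1) * (ln z - (\<Sum>p\<in>?P. step_error p)) / fact k"
    using z by (intro divide_right_mono mult_left_mono) auto
  moreover have "(\<Prod>p\<in>?P. euler_factor p) \<ge> 0"
    using euler_factor_pos by (intro prod_nonneg) (auto intro: less_imp_le)
  ultimately have "prod euler_seq {..N} * (ln z ^ (k - 1) * (ln z - C'_const k) / fact k)
      \<le> (\<Prod>p\<in>?P. euler_factor p) * (ln z ^ (k - 1) * (ln z - (\<Sum>p\<in>?P. step_error p)) / fact k)"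
    unfolding prod_euler_seq_atMost by (rule mult_left_mono)
  also have "\<dots> = (\<Prod>p\<in>?P. euler_factor p) * ln z ^ (k - 1) * (ln z - (\<Sum>p\<in>?P. step_error p)) / fact k"
    by simp
  also have "\<dots> \<le> L_fun z (\<lambda>p. real (\<omega> p))"
    unfolding L_fun_eq_mult_sum[OF N] by (rule mult_sum_sieve_factors_ge[OF finP prP z])
  finally show ?thesis .
qed

lemma prodinf_euler_seq_le_L_fun:
  assumes k3: "k \<ge> 3" and "finite P0" and "\<And>p. prime p \<Longrightarrow> p \<notin> P0 \<Longrightarrow> \<omega> p = k" and z: "z \<ge> 1"
  shows "prodinf euler_seq * (ln z ^ (k - 1) * (ln z - C'_const k) / fact k) \<le> L_fun z (\<lambda>p. real (\<omega> p))"
proof (rule LIMSEQ_le_const2)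
  show "(\<lambda>N. prod euler_seq {..N} * (ln z ^ (k - 1) * (ln z - C'_const k) / fact k))
      \<longlonglongrightarrow> prodinf euler_seq * (ln z ^ (k - 1) * (ln z - C'_const k) / fact k)"
    using convergent_prod_euler_seq[OF assms(2,3)] by (intro tendsto_mult_right convergent_prod_LIMSEQ)
  have "prod euler_seq {..N} * (ln z ^ (k - 1) * (ln z - C'_const k) / fact k) \<le> L_fun z (\<lambda>p. real (\<omega> p))"
    if "N \<ge> nat \<lceil>z\<rceil>" for N
    using L_fun_ge_partial_euler_prod[OF k3 z] that real_nat_ceiling_ge[of z]
    by (meson of_nat_le_iff order_trans)
  then show "\<exists>N0. \<forall>N\<ge>N0. prod euler_seq {..N} * (ln z ^ (k - 1) * (ln z - C'_const k) / fact k)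
      \<le> L_fun z (\<lambda>p. real (\<omega> p))"
    by blast
qed

end

lemma fact_scaled_power_eq:
  fixes S L C :: real
  assumes "L \<noteq> 0" and "k \<ge> 1"
  shows "1 / fact k * S * L ^ k * (1 - C / L) = S * (L ^ (k - 1) * (L - C) / fact k)"
proof -
  have "L ^ k = L ^ (k - 1) * L"
    using assms(2) by (metis Suc_diff_le diff_Suc_1 power_Suc2)
  then have "L ^ k * (1 - C / L) = L ^ (k - 1) * (L - C)"
    using assms(1) by (simp add: field_simps)
  moreover have "1 / fact k * S * L ^ k * (1 - C / L) = S * (L ^ k * (1 - C / L)) / fact k"
    by simp
  ultimately show ?thesis by simp
qed

theorem mainTheorem11:
  fixes \<kappa> :: nat and \<omega> :: "nat \<Rightarrow> nat" and P0 :: "nat set" and z :: real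
  assumes "\<kappa> \<ge> 3"
    and "finite P0" and "\<forall>p\<in>P0. prime p"
    and "\<forall>p\<in>P0. \<omega> p < \<kappa>"
    and "\<forall>p. prime p \<and> p \<notin> P0 \<longrightarrow> \<omega> p = \<kappa>"
    and "\<forall>p. prime p \<longrightarrow> \<omega> p < p"
    and "z > real (primorial (real \<kappa>))"
  shows "L_fun z (\<lambda>p. real (\<omega> p)) \<ge>
    1 / fact \<kappa> *
    (\<Prod>p. if prime p then inverse (1 - real (\<omega> p) / real p) * (1 - 1 / real p) ^ \<kappa> else 1) *
    (ln z) ^ \<kappa> * (1 - C'_const \<kappa> / ln z)"
proof -
  interpret sieve_weights \<kappa> \<omega>
  proof
    show "\<And>p. prime p \<Longrightarrow> \<omega> p \<le> \<kappa>"
      using assms(4,5) by (metis less_imp_le order_refl)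
  qed (use assms(1,6) in auto)
  have "primorial (real \<kappa>) \<ge> 1"
    unfolding primorial_def by (rule prod_ge_1) (auto dest: prime_gt_0_nat)
  then have z: "z > 1" using assms(7) by linarith
  then have "prodinf euler_seq * (ln z ^ (\<kappa> - 1) * (ln z - C'_const \<kappa>) / fact \<kappa>)
      \<le> L_fun z (\<lambda>p. real (\<omega> p))"
    using prodinf_euler_seq_le_L_fun[OF assms(1,2)] assms(5) by simp
  moreover have "1 / fact \<kappa> * prodinf euler_seq * ln z ^ \<kappa> * (1 - C'_const \<kappa> / ln z)
      = prodinf euler_seq * (ln z ^ (\<kappa> - 1) * (ln z - C'_const \<kappa>) / fact \<kappa>)"
    using z assms(1) by (intro fact_scaled_power_eq) simp_all
  ultimately show ?thesis
    unfolding euler_seq_def[abs_def] by linarith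
qed

end
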